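(* The calculus $\lambda^a_{\parallel}$ terminates: if $\Gamma\vdash^a D:\alpha$ in $\lambda^a_{\parallel}$, then there is no infinite reduction sequence $D\to D_1\to D_2\to\cdots$.
   Context: Terms up to $\alpha$-renaming; substitution capture-avoiding. $\lambda^a_{\parallel}$: usages $u\in\{\infty,1,0\}$ with $\downarrow\infty=\infty$, $\downarrow1=0$, $\downarrow0$ undefined. Values $V::=*\mid\lambda y_1\ldots y_n.D$ ($n\ge1$); declarations $D::=\mathsf{let}_{u_1}x_1=V_1\,\mathsf{in}\cdots\mathsf{let}_{u_m}x_m=V_m\,\mathsf{in}\,M$ ($m\ge0$); terms $M::=x\mid@(M,M_1,\ldots,M_n)\mid(M\mid M)$ ($n\ge1$). Convention: applying $@$ or $\mid$ to declarations abbreviates the declaration obtained by moving all their let-prefixes (renamed apart) to the front. Evaluation contexts $E::=\mathsf{let}_u x=V\,\mathsf{in}\,[\,]\mid E[@(x_1,\ldots,x_k,[\,],M_1,\ldots,M_l)]\mid E[[\,]\mid M]\mid E[M\mid[\,]]$; for $E=\mathsf{let}(\ldots)^*\,\mathsf{in}\,E'$ with $E'$ not starting with a let, $E[\mathsf{let}(\ldots)^*\,\mathsf{in}\,M]$ moves the let-prefix of the plugged declaration in front (no capture). Structural congruence $\equiv$: least equivalence closed under $\alpha$-renaming and the operators with $\mathsf{let}_{u_1}x_1=V_1\,\mathsf{in}\,\mathsf{let}_{u_2}x_2=V_2\,\mathsf{in}\,D\equiv\mathsf{let}_{u_2}x_2=V_2\,\mathsf{in}\,\mathsf{let}_{u_1}x_1=V_1\,\mathsf{in}\,D$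 if $x_1\notin FV(V_2),x_2\notin FV(V_1)$, and $\mathsf{let}_u x=V\,\mathsf{in}\,D\equiv D$ if $x\notin FV(D)$. Reduction: least relation containing $E[\mathsf{let}_u x=\lambda y_1\ldots y_n.D\,\mathsf{in}\,E'[@(x,z_1,\ldots,z_n)]]\to E[\mathsf{let}_{\downarrow u}x=\lambda y_1\ldots y_n.D\,\mathsf{in}\,E'[[z_1/y_1,\ldots,z_n/y_n]D]]$ (only when $u\ne0$; $z_i$ variables), closed under $\equiv$. Value types $A::=\langle1\rangle\mid\langle A_1\to\cdots\to A_n\to\alpha\rangle$; types $\alpha::=A\mid b$ ($b$ the behavior type). Typing ($\Gamma$ maps variables to value types): $\Gamma\vdash^a x:A$ if $x:A\in\Gamma$; $\Gamma\vdash^a\mathsf{let}_\infty x=*\,\mathsf{in}\,D:\alpha$ if $\Gamma,x:\langle1\rangle\vdash^a D:\alpha$; $\Gamma\vdash^a\mathsf{let}_u x=\lambda y_1\ldots y_n.D'\,\mathsf{in}\,D:\alpha$ if $u\ne0$, $\Gamma,y_1:A_1,\ldots,y_n:A_n\vdash^a D':\alpha'$ and $\Gamma,x:\langle A_1\to\cdots\to A_n\to\alpha'\rangle\vdash^a D:\alpha$; $\Gamma\vdash^a\mathsf{let}_0x=V\,\mathsf{in}\,D:\alpha$ if $V\ne*$ and $\Gamma,x:\langle A^+\to\alpha'\rangle\vdash^a D:\alpha$ for some $A^+,\alpha'$; $\Gamma\vdash^a@(M,N_1,\ldots,N_n):\alpha$ if $\Gamma\vdash^a M:\langle A_1\to\cdots\to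 A_n\to\alpha\rangle$ and $\Gamma\vdash^a N_i:A_i$; $\Gamma\vdash^a(M_1\mid M_2):b$ if $\Gamma\vdash^a M_i:b$. *)

theory Defs
  imports Main
begin

datatype usage = UInf | UOne | UZero

text \<open>Terms M ::= x | @(M, M1..Mn) | (M | M).  App M Ns encodes @(M, Ns).\<close>
datatype tm = Var nat | App tm "tm list" | Par tm tm

text \<open>Values V ::= * | \<lambda>y1..yn.D ; declarations D ::= let ... in M.\<close>
datatype val = Star | Lam "nat list" decl
     and decl = Let usage nat val decl | Body tm

text \<open>Value types <1> | <A1 -> ... -> An -> alpha> (n >= 1: VArr A As a encodes A#As);
  types are value types or the behaviour type b.\<close>
datatype vty = VUnit | VArr vty "vty list" ty
     and ty = VT vty | Beh

fun dec :: "usage \<Rightarrow> usage" where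
  "dec UInf = UInf" | "dec UOne = UZero" | "dec UZero = UZero" (* \<down>0 is never used *)

fun wf_tm :: "tm \<Rightarrow> bool" where
  "wf_tm (Var x) = True"
| "wf_tm (App M Ns) = (Ns \<noteq> [] \<and> wf_tm M \<and> (\<forall>N\<in>set Ns. wf_tm N))"
| "wf_tm (Par M N) = (wf_tm M \<and> wf_tm N)"

primrec wf_val :: "val \<Rightarrow> bool" and wf_decl :: "decl \<Rightarrow> bool" where
  "wf_val Star = True"
| "wf_val (Lam ys D) = (ys \<noteq> [] \<and> distinct ys \<and> wf_decl D)"
| "wf_decl (Let u x V D) = (wf_val V \<and> wf_decl D)"
| "wf_decl (Body M) = wf_tm M"

fun fv_tm :: "tm \<Rightarrow> nat set" where
  "fv_tm (Var x) = {x}"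
| "fv_tm (App M Ns) = fv_tm M \<union> (\<Union>N\<in>set Ns. fv_tm N)"
| "fv_tm (Par M N) = fv_tm M \<union> fv_tm N"

primrec fv_val :: "val \<Rightarrow> nat set" and fv_decl :: "decl \<Rightarrow> nat set" where
  "fv_val Star = {}"
| "fv_val (Lam ys D) = fv_decl D - set ys"
| "fv_decl (Let u x V D) = fv_val V \<union> (fv_decl D - {x})"
| "fv_decl (Body M) = fv_tm M"

primrec bv_val :: "val \<Rightarrow> nat set" and bv_decl :: "decl \<Rightarrow> nat set" where
  "bv_val Star = {}"
| "bv_val (Lam ys D) = set ys \<union> bv_decl D"
| "bv_decl (Let u x V D) = insert x (bv_val V \<union> bv_decl D)"
| "bv_decl (Body M) = {}"

fun subst_tm :: "(nat \<Rightarrow> nat) \<Rightarrow> tm \<Rightarrow> tm" where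
  "subst_tm \<sigma> (Var x) = Var (\<sigma> x)"
| "subst_tm \<sigma> (App M Ns) = App (subst_tm \<sigma> M) (map (subst_tm \<sigma>) Ns)"
| "subst_tm \<sigma> (Par M N) = Par (subst_tm \<sigma> M) (subst_tm \<sigma> N)"

text \<open>It is capture-avoiding whenever the bound names of the term avoid the range of
  the substitution; this side condition is imposed wherever it is used below.\<close>
primrec subst_val :: "(nat \<Rightarrow> nat) \<Rightarrow> val \<Rightarrow> val"
  and subst_decl :: "(nat \<Rightarrow> nat) \<Rightarrow> decl \<Rightarrow> decl" where
  "subst_val \<sigma> Star = Star"
| "subst_val \<sigma> (Lam ys D) = Lam ys (subst_decl (\<lambda>v. if v \<in> set ys then v else \<sigma> v) D)"
| "subst_decl \<sigma> (Let u x V D) = Let u x (subst_val \<sigma> V) (subst_decl (\<sigma>(x := x)) D)"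
| "subst_decl \<sigma> (Body M) = Body (subst_tm \<sigma> M)"

definition sub :: "nat list \<Rightarrow> nat list \<Rightarrow> nat \<Rightarrow> nat" where
  "sub ys zs v = (case map_of (zip ys zs) v of Some z \<Rightarrow> z | None \<Rightarrow> v)"

type_synonym binding = "usage \<times> nat \<times> val"

fun lets_of :: "decl \<Rightarrow> binding list" where
  "lets_of (Let u x V D) = (u, x, V) # lets_of D"
| "lets_of (Body M) = []"

fun body_of :: "decl \<Rightarrow> tm" where
  "body_of (Let u x V D) = body_of D"
| "body_of (Body M) = M"

definition mk_decl :: "binding list \<Rightarrow> tm \<Rightarrow> decl" where
  "mk_decl L M = foldr (\<lambda>(u, x, V) D. Let u x V D) L (Body M)"

definition binders :: "binding list \<Rightarrow> nat set" where
  "binders L = set (map (\<lambda>(u, x, V). x) L)"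

inductive cong_val :: "val \<Rightarrow> val \<Rightarrow> bool"
  and cong_decl :: "decl \<Rightarrow> decl \<Rightarrow> bool" where
  cv_refl: "cong_val V V"
| cv_sym: "cong_val V W \<Longrightarrow> cong_val W V"
| cv_trans: "cong_val U V \<Longrightarrow> cong_val V W \<Longrightarrow> cong_val U W"
| cd_refl: "cong_decl D D"
| cd_sym: "cong_decl D E \<Longrightarrow> cong_decl E D"
| cd_trans: "cong_decl C D \<Longrightarrow> cong_decl D E \<Longrightarrow> cong_decl C E"
| cv_lam: "cong_decl D D' \<Longrightarrow> cong_val (Lam ys D) (Lam ys D')"
| cd_let: "cong_val V V' \<Longrightarrow> cong_decl D D' \<Longrightarrow> cong_decl (Let u x V D) (Let u x V' D')"
| cv_alpha: "length ys' = length ys \<Longrightarrow> distinct ys' \<Longrightarrow>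
     set ys' \<inter> (fv_decl D \<union> bv_decl D) = {} \<Longrightarrow>
     cong_val (Lam ys D) (Lam ys' (subst_decl (sub ys ys') D))"
| cd_alpha: "x' \<notin> fv_decl D \<Longrightarrow> x' \<notin> bv_decl D \<Longrightarrow>
     cong_decl (Let u x V D) (Let u x' V (subst_decl (id(x := x')) D))"
| cd_swap: "x1 \<noteq> x2 \<Longrightarrow> x1 \<notin> fv_val V2 \<Longrightarrow> x2 \<notin> fv_val V1 \<Longrightarrow>
     cong_decl (Let u1 x1 V1 (Let u2 x2 V2 D)) (Let u2 x2 V2 (Let u1 x1 V1 D))"
| cd_gc: "x \<notin> fv_decl D \<Longrightarrow> wf_val V \<Longrightarrow> cong_decl (Let u x V D) D"

section \<open>Evaluation contexts (the let-free part; let-prefixes are handled separately)\<close>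

fun app_list :: "tm list \<Rightarrow> tm" where
  "app_list (h # as) = App h as"
| "app_list [] = Var 0" (* unreachable *)

inductive ectx :: "(tm \<Rightarrow> tm) \<Rightarrow> bool" where
  ec_hole: "ectx (\<lambda>t. t)"
| ec_app: "ectx C \<Longrightarrow> length xs + length Ms \<ge> 1 \<Longrightarrow>
     ectx (\<lambda>t. C (app_list (map Var xs @ t # Ms)))"
| ec_parl: "ectx C \<Longrightarrow> ectx (\<lambda>t. C (Par t M))"
| ec_parr: "ectx C \<Longrightarrow> ectx (\<lambda>t. C (Par M t))"

text \<open>Base rule E[let_u x = \<lambda>ys.Db in E'[@(x,zs)]] \<rightarrow> E[let_{\<down>u} x = \<lambda>ys.Db in E'[[zs/ys]Db]].
  L1 / L2 are the let-prefixes of E and E', C the let-free part of the context.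
  The side conditions are the Barendregt variable convention (no capture); since
  the relation is closed under structural congruence, which contains alpha, they
  lose no generality.\<close>
inductive base_red :: "decl \<Rightarrow> decl \<Rightarrow> bool" where
  "ectx C \<Longrightarrow> u \<noteq> UZero \<Longrightarrow> length zs = length ys \<Longrightarrow> zs \<noteq> [] \<Longrightarrow>
   x \<notin> binders L2 \<Longrightarrow>
   fv_val (Lam ys Db) \<inter> insert x (binders L2) = {} \<Longrightarrow>
   bv_decl Db \<inter> set zs = {} \<Longrightarrow>
   binders (lets_of Db) \<inter> fv_tm (C (App (Var x) (map Var zs))) = {} \<Longrightarrow>
   base_red (mk_decl (L1 @ [(u, x, Lam ys Db)] @ L2) (C (App (Var x) (map Var zs))))
            (mk_decl (L1 @ [(dec u, x, Lam ys Db)] @ L2 @ lets_of (subst_decl (sub ys zs) Db))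
                     (C (body_of (subst_decl (sub ys zs) Db))))"

definition red :: "decl \<Rightarrow> decl \<Rightarrow> bool" where
  "red D1 D2 \<longleftrightarrow> (\<exists>D D'. cong_decl D1 D \<and> base_red D D' \<and> cong_decl D' D2)"

type_synonym env = "nat \<Rightarrow> vty option"

inductive typ_tm :: "env \<Rightarrow> tm \<Rightarrow> ty \<Rightarrow> bool" where
  t_var: "\<Gamma> x = Some A \<Longrightarrow> typ_tm \<Gamma> (Var x) (VT A)"
| t_app: "typ_tm \<Gamma> M (VT (VArr A As \<alpha>)) \<Longrightarrow> length Ns = length (A # As) \<Longrightarrow>
     (\<forall>i<length Ns. typ_tm \<Gamma> (Ns ! i) (VT ((A # As) ! i))) \<Longrightarrow> typ_tm \<Gamma> (App M Ns) \<alpha>"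
| t_par: "typ_tm \<Gamma> M1 Beh \<Longrightarrow> typ_tm \<Gamma> M2 Beh \<Longrightarrow> typ_tm \<Gamma> (Par M1 M2) Beh"

inductive typ_decl :: "env \<Rightarrow> decl \<Rightarrow> ty \<Rightarrow> bool" where
  t_body: "typ_tm \<Gamma> M \<alpha> \<Longrightarrow> typ_decl \<Gamma> (Body M) \<alpha>"
| t_star: "typ_decl (\<Gamma>(x \<mapsto> VUnit)) D \<alpha> \<Longrightarrow> typ_decl \<Gamma> (Let UInf x Star D) \<alpha>"
| t_lam: "u \<noteq> UZero \<Longrightarrow> length ys = length (A # As) \<Longrightarrow>
     typ_decl (\<Gamma>(ys [\<mapsto>] (A # As))) D' \<alpha>' \<Longrightarrow>
     typ_decl (\<Gamma>(x \<mapsto> VArr A As \<alpha>')) D \<alpha> \<Longrightarrow>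
     typ_decl \<Gamma> (Let u x (Lam ys D') D) \<alpha>"
| t_zero: "V \<noteq> Star \<Longrightarrow> typ_decl (\<Gamma>(x \<mapsto> VArr A As \<alpha>')) D \<alpha> \<Longrightarrow>
     typ_decl \<Gamma> (Let UZero x V D) \<alpha>"

end

theory Submission
  imports Defs
begin

text \<open>Declarations are evaluated big-step into closures, counting closure calls. The logical relation
  \<open>approx A c c'\<close> says that \<open>c'\<close> behaves like \<open>c\<close> at type \<open>A\<close> using no more calls. By the fundamental
  lemma every (laxly) typed declaration is related to itself, so its evaluation terminates and has a
  well-defined cost. Structural congruence preserves typing and relates both sides without changing the cost, while a
  base reduction step replaces a call by the inlined body and so saves at least one call; turning a
  used-up \<open>let\<^sub>1\<close> binding into \<open>Stuck\<close> costs nothing. An infinite reduction sequence would thus give an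
  infinite descending sequence of costs.\<close>

section \<open>Cost-counting evaluation\<close>

datatype clo = Stuck | Clo "nat list" decl "nat \<Rightarrow> clo"

fun first_index :: "nat list \<Rightarrow> nat \<Rightarrow> nat" where
  "first_index [] v = 0"
| "first_index (y # ys) v = (if y = v then 0 else Suc (first_index ys v))"

definition upds :: "(nat \<Rightarrow> 'a) \<Rightarrow> nat list \<Rightarrow> 'a list \<Rightarrow> nat \<Rightarrow> 'a" where
  "upds \<sigma> ys vs v = (case map_of (zip ys vs) v of Some c \<Rightarrow> c | None \<Rightarrow> \<sigma> v)"

lemma map_of_zip_first_index:
  "v \<in> set ys \<Longrightarrow> length ys = length xs \<Longrightarrow>
   map_of (zip ys xs) v = Some (xs ! first_index ys v) \<and> first_index ys v < length ys \<and> ys ! first_index ys v = v"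
proof (induction ys arbitrary: xs)
  case (Cons y ys)
  then obtain x xs' where "xs = x # xs'" by (cases xs) auto
  with Cons show ?case by auto
qed simp

lemma map_of_zip_notin: "v \<notin> set ys \<Longrightarrow> map_of (zip ys xs) v = None"
  by (induction ys arbitrary: xs) (auto simp: zip_Cons1 split: list.splits)

lemma first_index_nth: "distinct ys \<Longrightarrow> i < length ys \<Longrightarrow> first_index ys (ys ! i) = i"
  by (induction ys arbitrary: i) (auto simp: nth_Cons split: nat.splits)

lemma upds_in: "v \<in> set ys \<Longrightarrow> length ys = length xs \<Longrightarrow> upds \<sigma> ys xs v = xs ! first_index ys v"
  using map_of_zip_first_index[of v ys xs] by (simp add: upds_def)

lemma upds_notin: "v \<notin> set ys \<Longrightarrow> upds \<sigma> ys xs v = \<sigma> v"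
  by (simp add: upds_def map_of_zip_notin)

lemma sub_eq_upds: "sub ys zs = upds (\<lambda>v. v) ys zs"
  by (auto simp: sub_def upds_def fun_eq_iff)

definition closure :: "(nat \<Rightarrow> clo) \<Rightarrow> val \<Rightarrow> clo" where
  "closure \<rho> V = (case V of Star \<Rightarrow> Stuck | Lam ys D \<Rightarrow> Clo ys D \<rho>)"

definition bind_closure :: "usage \<Rightarrow> (nat \<Rightarrow> clo) \<Rightarrow> val \<Rightarrow> clo" where
  "bind_closure u \<rho> V = (if u = UZero then Stuck else closure \<rho> V)"

text \<open>A closure that may no longer be
  called, the unit value and ill-formed calls all become \<open>Stuck\<close>, and calling \<open>Stuck\<close> costs nothing.\<close>

inductive ev_tm :: "(nat \<Rightarrow> clo) \<Rightarrow> tm \<Rightarrow> nat \<Rightarrow> clo \<Rightarrow> bool"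
  and ev_tms :: "(nat \<Rightarrow> clo) \<Rightarrow> tm list \<Rightarrow> nat \<Rightarrow> clo list \<Rightarrow> bool"
  and call :: "clo \<Rightarrow> clo list \<Rightarrow> nat \<Rightarrow> clo \<Rightarrow> bool"
  and ev_decl :: "(nat \<Rightarrow> clo) \<Rightarrow> decl \<Rightarrow> nat \<Rightarrow> clo \<Rightarrow> bool" where
  ev_var: "ev_tm \<rho> (Var x) 0 (\<rho> x)"
| ev_app: "ev_tm \<rho> M n c \<Longrightarrow> ev_tms \<rho> Ns k vs \<Longrightarrow> call c vs m r \<Longrightarrow> ev_tm \<rho> (App M Ns) (n + k + m) r"
| ev_par: "ev_tm \<rho> M1 n1 r1 \<Longrightarrow> ev_tm \<rho> M2 n2 r2 \<Longrightarrow> ev_tm \<rho> (Par M1 M2) (n1 + n2) Stuck"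
| ev_nil: "ev_tms \<rho> [] 0 []"
| ev_cons: "ev_tm \<rho> N n v \<Longrightarrow> ev_tms \<rho> Ns k vs \<Longrightarrow> ev_tms \<rho> (N # Ns) (n + k) (v # vs)"
| call_Stuck: "call Stuck vs 0 Stuck"
| call_arity: "length ys \<noteq> length vs \<Longrightarrow> call (Clo ys D \<sigma>) vs 0 Stuck"
| call_Clo: "length ys = length vs \<Longrightarrow> ev_decl (upds \<sigma> ys vs) D m r \<Longrightarrow> call (Clo ys D \<sigma>) vs (Suc m) r"
| ev_Body: "ev_tm \<rho> M n r \<Longrightarrow> ev_decl \<rho> (Body M) n r"
| ev_Let: "ev_decl (\<rho>(x := bind_closure u \<rho> V)) D n r \<Longrightarrow> ev_decl \<rho> (Let u x V D) n r"

inductive_cases ev_VarE: "ev_tm \<rho> (Var x) n r"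
inductive_cases ev_AppE: "ev_tm \<rho> (App M Ns) n r"
inductive_cases ev_ParE: "ev_tm \<rho> (Par M1 M2) n r"
inductive_cases ev_nilE: "ev_tms \<rho> [] n r"
inductive_cases ev_consE: "ev_tms \<rho> (N # Ns) n r"
inductive_cases call_StuckE: "call Stuck vs n r"
inductive_cases call_CloE: "call (Clo ys D \<sigma>) vs n r"
inductive_cases ev_BodyE: "ev_decl \<rho> (Body M) n r"
inductive_cases ev_LetE: "ev_decl \<rho> (Let u x V D) n r"

lemma ev_deterministic:
  "ev_tm \<rho> M n r \<Longrightarrow> ev_tm \<rho> M n' r' \<Longrightarrow> n' = n \<and> r' = r"
  "ev_tms \<rho> Ns n rs \<Longrightarrow> ev_tms \<rho> Ns n' rs' \<Longrightarrow> n' = n \<and> rs' = rs"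
  "call c vs n r \<Longrightarrow> call c vs n' r' \<Longrightarrow> n' = n \<and> r' = r"
  "ev_decl \<rho> D n r \<Longrightarrow> ev_decl \<rho> D n' r' \<Longrightarrow> n' = n \<and> r' = r"
proof (induction arbitrary: n' r' and n' rs' and n' r' and n' r' rule: ev_tm_ev_tms_call_ev_decl.inducts)
  case (ev_app \<rho> M n c Ns k vs m r)
  from ev_app.prems obtain n1 c1 k1 vs1 m1
    where "ev_tm \<rho> M n1 c1" "ev_tms \<rho> Ns k1 vs1" "call c1 vs1 m1 r'" "n' = n1 + k1 + m1"
    by (blast elim: ev_AppE)
  then show ?case using ev_app.IH by metis
qed (blast elim: ev_VarE ev_ParE ev_nilE ev_consE call_StuckE call_CloE ev_BodyE ev_LetE)+

lemma ev_Body_iff: "ev_decl \<rho> (Body M) n r \<longleftrightarrow> ev_tm \<rho> M n r"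
  by (blast elim: ev_BodyE intro: ev_Body)

lemma ev_Let_iff: "ev_decl \<rho> (Let u x V D) n r \<longleftrightarrow> ev_decl (\<rho>(x := bind_closure u \<rho> V)) D n r"
  by (blast elim: ev_LetE intro: ev_Let)

lemma ev_tms_vars: "ev_tms \<rho> (map Var zs) 0 (map \<rho> zs)"
  by (induction zs) (auto intro: ev_nil ev_cons[where n = 0 and k = 0, simplified] ev_var)

section \<open>The logical relation\<close>

text \<open>The diagonal conjuncts for the right-hand side make \<open>approx\<close> transitive.\<close>

fun approx :: "vty \<Rightarrow> clo \<Rightarrow> clo \<Rightarrow> bool"
  and approx_ty :: "ty \<Rightarrow> clo \<Rightarrow> clo \<Rightarrow> bool"
  and approx_args :: "vty list \<Rightarrow> clo list \<Rightarrow> clo list \<Rightarrow> bool" where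
  "approx VUnit c c' = True"
| "approx (VArr A As \<beta>) c c' = (\<forall>vs vs'. approx_args (A # As) vs vs' \<longrightarrow>
      (\<exists>m r m' r'. call c vs m r \<and> call c' vs' m' r' \<and> m' \<le> m \<and> approx_ty \<beta> r r' \<and> approx_ty \<beta> r' r'))"
| "approx_ty Beh c c' = True"
| "approx_ty (VT A) c c' = approx A c c'"
| "approx_args [] vs vs' = (vs = [] \<and> vs' = [])"
| "approx_args (A # As) vs vs' = (\<exists>v w v' w'. vs = v # w \<and> vs' = v' # w' \<and>
      approx A v v' \<and> approx A v' v' \<and> approx_args As w w')"

definition approx_ev :: "nat \<Rightarrow> ty \<Rightarrow> (nat \<Rightarrow> clo \<Rightarrow> bool) \<Rightarrow> (nat \<Rightarrow> clo \<Rightarrow> bool) \<Rightarrow> bool" where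
  "approx_ev d \<alpha> E E' \<longleftrightarrow> (\<exists>n r n' r'. E n r \<and> E' n' r' \<and> n' + d \<le> n \<and> approx_ty \<alpha> r r' \<and> approx_ty \<alpha> r' r')"

lemma approx_VArr:
  "approx (VArr A As \<beta>) c c' \<longleftrightarrow> (\<forall>vs vs'. approx_args (A # As) vs vs' \<longrightarrow> approx_ev 0 \<beta> (call c vs) (call c' vs'))"
  by (simp add: approx_ev_def)

declare approx.simps(2)[simp del]

lemma approx_evI:
  "E n r \<Longrightarrow> E' n' r' \<Longrightarrow> n' + d \<le> n \<Longrightarrow> approx_ty \<alpha> r r' \<Longrightarrow> approx_ty \<alpha> r' r' \<Longrightarrow> approx_ev d \<alpha> E E'"
  unfolding approx_ev_def by blast

lemma approx_ev_trans:
  assumes "approx_ev d1 \<alpha> E1 E2" and "approx_ev d2 \<alpha> E2 E3"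
    and det: "\<And>n r n' r'. E2 n r \<Longrightarrow> E2 n' r' \<Longrightarrow> n' = n \<and> r' = r"
    and trans: "\<And>a b c. approx_ty \<alpha> a b \<Longrightarrow> approx_ty \<alpha> b c \<Longrightarrow> approx_ty \<alpha> a c"
  shows "approx_ev (d1 + d2) \<alpha> E1 E3"
proof -
  from assms(1) obtain n1 r1 n2 r2 where 1: "E1 n1 r1" "E2 n2 r2" "n2 + d1 \<le> n1" "approx_ty \<alpha> r1 r2"
    unfolding approx_ev_def by blast
  from assms(2) obtain n2' r2' n3 r3 where 2: "E2 n2' r2'" "E3 n3 r3" "n3 + d2 \<le> n2'"
      "approx_ty \<alpha> r2' r3" "approx_ty \<alpha> r3 r3"
    unfolding approx_ev_def by blast
  from det[OF 1(2) 2(1)] 1 2 show ?thesis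
    by (intro approx_evI[of E1 n1 r1 E3 n3 r3]) (auto intro: trans)
qed

lemma approx_Stuck: "approx A Stuck Stuck" "approx_ty \<alpha> Stuck Stuck"
proof (induction A and \<alpha>)
  case (VArr A As \<beta>)
  then show ?case by (auto simp: approx_VArr intro!: approx_evI call_Stuck)
qed simp_all

lemma approx_args_right: "approx_args As vs vs' \<Longrightarrow> approx_args As vs' vs'"
  by (induction As arbitrary: vs vs') auto

lemma approx_args_nth:
  "approx_args As vs vs' \<Longrightarrow> length vs = length As \<and> length vs' = length As \<and>
     (\<forall>i<length As. approx (As ! i) (vs ! i) (vs' ! i) \<and> approx (As ! i) (vs' ! i) (vs' ! i))"
proof (induction As arbitrary: vs vs')
  case (Cons A As)
  then obtain v w v' w' where "vs = v # w" "vs' = v' # w'" "approx A v v'" "approx A v' v'" "approx_args As w w'"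
    by auto
  with Cons.IH[of w w'] show ?case by (auto simp: nth_Cons split: nat.splits)
qed simp

text \<open>Replacing the right-hand closure by \<open>Stuck\<close> is always sound: \<open>Stuck\<close> answers every call at no
  cost. This is what lets a used-up \<open>let\<^sub>1\<close> binding be discarded.\<close>

lemma approx_Stuck_right: "approx A c c' \<Longrightarrow> approx A c Stuck" "approx_ty \<alpha> c c' \<Longrightarrow> approx_ty \<alpha> c Stuck"
proof (induction A and \<alpha> arbitrary: c c' and c c')
  case (VArr A As \<beta>)
  show ?case unfolding approx_VArr
  proof (intro allI impI)
    fix vs vs' assume "approx_args (A # As) vs vs'"
    with VArr.prems obtain m r m' r' where "call c vs m r" "approx_ty \<beta> r r'"
      unfolding approx_VArr approx_ev_def by blast
    then show "approx_ev 0 \<beta> (call c vs) (call Stuck vs')"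
      using VArr.IH(3) approx_Stuck(2) by (intro approx_evI[where n' = 0 and r' = Stuck]) (auto intro: call_Stuck)
  qed
qed simp_all

lemma approx_trans: "approx A a b \<Longrightarrow> approx A b c \<Longrightarrow> approx A a c"
  "approx_ty \<alpha> a b \<Longrightarrow> approx_ty \<alpha> b c \<Longrightarrow> approx_ty \<alpha> a c"
proof (induction A and \<alpha> arbitrary: a b c and a b c)
  case (VArr A As \<beta>)
  show ?case unfolding approx_VArr
  proof (intro allI impI)
    fix vs vs' assume vs: "approx_args (A # As) vs vs'"
    have "approx_ev 0 \<beta> (call a vs) (call b vs')" using VArr.prems(1) vs by (simp add: approx_VArr)
    moreover have "approx_ev 0 \<beta> (call b vs') (call c vs')"
      using VArr.prems(2) approx_args_right[OF vs] by (simp add: approx_VArr)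
    ultimately show "approx_ev 0 \<beta> (call a vs) (call c vs')"
      using approx_ev_trans[OF _ _ ev_deterministic(3) VArr.IH(3)] by fastforce
  qed
qed simp_all

section \<open>Capture-free renaming\<close>

lemma subst_tm_cong: "\<forall>v\<in>fv_tm M. \<sigma> v = \<sigma>' v \<Longrightarrow> subst_tm \<sigma> M = subst_tm \<sigma>' M"
  by (induction M) auto

lemma fv_subst_tm[simp]: "fv_tm (subst_tm \<sigma> M) = \<sigma> ` fv_tm M"
  by (induction M) auto

lemma subst_tm_id[simp]: "subst_tm (\<lambda>v. v) M = M"
  by (induction M) (auto simp: map_idI)

lemma subst_val_cong: "\<forall>v\<in>fv_val V. \<sigma> v = \<sigma>' v \<Longrightarrow> subst_val \<sigma> V = subst_val \<sigma>' V"
  and subst_decl_cong: "\<forall>v\<in>fv_decl D. \<sigma> v = \<sigma>' v \<Longrightarrow> subst_decl \<sigma> D = subst_decl \<sigma>' D"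
proof (induction V and D arbitrary: \<sigma> \<sigma>' and \<sigma> \<sigma>')
  case (Body M)
  then show ?case by (simp add: subst_tm_cong)
qed auto

lemma subst_val_id[simp]: "subst_val (\<lambda>v. v) V = V"
  and subst_decl_id[simp]: "subst_decl (\<lambda>v. v) D = D"
proof (induction V and D)
  case (Lam ys D)
  have "(\<lambda>v. if v \<in> set ys then v else v) = (\<lambda>v. v)" by auto
  with Lam show ?case by simp
next
  case (Let u x V D)
  have "(\<lambda>v. v)(x := x) = (\<lambda>v. v)" by auto
  with Let show ?case by simp
qed simp_all

primrec capture_free_val :: "(nat \<Rightarrow> nat) \<Rightarrow> val \<Rightarrow> bool"
  and capture_free_decl :: "(nat \<Rightarrow> nat) \<Rightarrow> decl \<Rightarrow> bool" where
  "capture_free_val \<sigma> Star = True"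
| "capture_free_val \<sigma> (Lam ys D) \<longleftrightarrow> capture_free_decl (\<lambda>v. if v \<in> set ys then v else \<sigma> v) D \<and>
     (\<forall>v\<in>fv_decl D - set ys. \<sigma> v \<notin> set ys)"
| "capture_free_decl \<sigma> (Let u x V D) \<longleftrightarrow> capture_free_val \<sigma> V \<and> capture_free_decl (\<sigma>(x := x)) D \<and>
     (\<forall>v\<in>fv_decl D - {x}. \<sigma> v \<noteq> x)"
| "capture_free_decl \<sigma> (Body M) = True"

lemma fv_subst_val: "capture_free_val \<sigma> V \<Longrightarrow> fv_val (subst_val \<sigma> V) = \<sigma> ` fv_val V"
  and fv_subst_decl: "capture_free_decl \<sigma> D \<Longrightarrow> fv_decl (subst_decl \<sigma> D) = \<sigma> ` fv_decl D"
proof (induction V and D arbitrary: \<sigma> and \<sigma>)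
  case (Lam ys D)
  let ?s = "\<lambda>v. if v \<in> set ys then v else \<sigma> v"
  have cf: "capture_free_decl ?s D" using Lam.prems by simp
  show ?case unfolding subst_val.simps fv_val.simps Lam.IH[OF cf] using Lam.prems by (auto simp: image_iff)
next
  case (Let u x V D)
  have cf: "capture_free_val \<sigma> V" "capture_free_decl (\<sigma>(x := x)) D"
    using Let.prems unfolding capture_free_decl.simps by blast+
  show ?case unfolding subst_decl.simps fv_decl.simps Let.IH(1)[OF cf(1)] Let.IH(2)[OF cf(2)]
    using Let.prems by (auto simp: image_iff)
qed simp_all

lemma subst_comp_val: "capture_free_val \<sigma> V \<Longrightarrow> subst_val \<sigma>' (subst_val \<sigma> V) = subst_val (\<sigma>' \<circ> \<sigma>) V"
  and subst_comp_decl: "capture_free_decl \<sigma> D \<Longrightarrow> subst_decl \<sigma>' (subst_decl \<sigma> D) = subst_decl (\<sigma>' \<circ> \<sigma>) D"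
proof (induction V and D arbitrary: \<sigma> \<sigma>' and \<sigma> \<sigma>')
  case (Lam ys D)
  let ?s = "\<lambda>v. if v \<in> set ys then v else \<sigma> v" and ?s' = "\<lambda>v. if v \<in> set ys then v else \<sigma>' v"
  have "subst_decl ?s' (subst_decl ?s D) = subst_decl (?s' \<circ> ?s) D"
    using Lam.prems by (intro Lam.IH) simp
  also have "\<dots> = subst_decl (\<lambda>v. if v \<in> set ys then v else (\<sigma>' \<circ> \<sigma>) v) D"
    using Lam.prems by (intro subst_decl_cong) auto
  finally show ?case by (simp only: subst_val.simps comp_def)
next
  case (Let u x V D)
  have "subst_decl (\<sigma>'(x := x)) (subst_decl (\<sigma>(x := x)) D) = subst_decl (\<sigma>'(x := x) \<circ> \<sigma>(x := x)) D"
    using Let.prems unfolding capture_free_decl.simps by (intro Let.IH(2)) blast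
  also have "\<dots> = subst_decl ((\<sigma>' \<circ> \<sigma>)(x := x)) D"
    using Let.prems by (intro subst_decl_cong) auto
  moreover have "subst_val \<sigma>' (subst_val \<sigma> V) = subst_val (\<sigma>' \<circ> \<sigma>) V"
    using Let.prems unfolding capture_free_decl.simps by (intro Let.IH(1)) blast
  ultimately show ?case by (simp add: comp_def)
next
  case (Body M)
  then show ?case by (induction M) auto
qed simp

lemma capture_free_if_fresh:
  "(\<And>v. v \<in> fv_val V \<Longrightarrow> \<sigma> v \<noteq> v \<Longrightarrow> \<sigma> v \<notin> bv_val V) \<Longrightarrow> capture_free_val \<sigma> V"
  "(\<And>v. v \<in> fv_decl D \<Longrightarrow> \<sigma> v \<noteq> v \<Longrightarrow> \<sigma> v \<notin> bv_decl D) \<Longrightarrow> capture_free_decl \<sigma> D"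
proof (induction V and D arbitrary: \<sigma> and \<sigma>)
  case (Lam ys D)
  let ?s = "\<lambda>v. if v \<in> set ys then v else \<sigma> v"
  have "capture_free_decl ?s D"
  proof (rule Lam.IH)
    fix v assume "v \<in> fv_decl D" "?s v \<noteq> v"
    then show "?s v \<notin> bv_decl D" using Lam.prems[of v] by (auto split: if_splits)
  qed
  moreover have "\<forall>v\<in>fv_decl D - set ys. \<sigma> v \<notin> set ys"
    using Lam.prems by (metis DiffD2 UnI1 bv_val.simps(2) fv_val.simps(2))
  ultimately show ?case by simp
next
  case (Let u x V D)
  have "capture_free_val \<sigma> V" using Let.prems by (intro Let.IH(1)) auto
  moreover have "capture_free_decl (\<sigma>(x := x)) D"
  proof (rule Let.IH(2))
    fix v assume "v \<in> fv_decl D" "(\<sigma>(x := x)) v \<noteq> v"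
    then show "(\<sigma>(x := x)) v \<notin> bv_decl D" using Let.prems[of v] by (auto split: if_splits)
  qed
  moreover have "\<forall>v\<in>fv_decl D - {x}. \<sigma> v \<noteq> x"
    using Let.prems by (metis Diff_iff UnI2 bv_decl.simps(1) fv_decl.simps(1) insertI1)
  ultimately show ?case unfolding capture_free_decl.simps by blast
qed simp_all

lemma capture_free_id[simp]: "capture_free_val (\<lambda>v. v) V" "capture_free_decl (\<lambda>v. v) D"
  by (simp_all add: capture_free_if_fresh)

lemma capture_free_subst_inverse:
  "capture_free_val \<sigma> V \<Longrightarrow> (\<And>v. v \<in> fv_val V \<Longrightarrow> \<sigma>' (\<sigma> v) = v) \<Longrightarrow> capture_free_val \<sigma>' (subst_val \<sigma> V)"
  "capture_free_decl \<sigma> D \<Longrightarrow> (\<And>v. v \<in> fv_decl D \<Longrightarrow> \<sigma>' (\<sigma> v) = v) \<Longrightarrow> capture_free_decl \<sigma>' (subst_decl \<sigma> D)"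
proof (induction V and D arbitrary: \<sigma> \<sigma>' and \<sigma> \<sigma>')
  case (Lam ys D)
  let ?s = "\<lambda>v. if v \<in> set ys then v else \<sigma> v" and ?s' = "\<lambda>v. if v \<in> set ys then v else \<sigma>' v"
  have cf: "capture_free_decl ?s D" and out: "\<forall>v\<in>fv_decl D - set ys. \<sigma> v \<notin> set ys" using Lam.prems(1) by auto
  have "capture_free_decl ?s' (subst_decl ?s D)" using Lam.prems(2) out by (intro Lam.IH[OF cf]) auto
  moreover have "\<forall>w\<in>fv_decl (subst_decl ?s D) - set ys. \<sigma>' w \<notin> set ys"
  proof
    fix w assume "w \<in> fv_decl (subst_decl ?s D) - set ys"
    then obtain v where "v \<in> fv_decl D" "v \<notin> set ys" "w = \<sigma> v" by (auto simp: fv_subst_decl[OF cf])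
    with Lam.prems(2)[of v] show "\<sigma>' w \<notin> set ys" by auto
  qed
  ultimately show ?case by simp
next
  case (Let u x V D)
  have cf: "capture_free_decl (\<sigma>(x := x)) D" and out: "\<forall>v\<in>fv_decl D - {x}. \<sigma> v \<noteq> x"
    using Let.prems(1) unfolding capture_free_decl.simps by blast+
  have 1: "capture_free_val \<sigma>' (subst_val \<sigma> V)"
    using Let.prems unfolding capture_free_decl.simps by (intro Let.IH(1)) auto
  have 2: "capture_free_decl (\<sigma>'(x := x)) (subst_decl (\<sigma>(x := x)) D)"
  proof (rule Let.IH(2)[OF cf])
    fix v assume "v \<in> fv_decl D"
    then show "(\<sigma>'(x := x)) ((\<sigma>(x := x)) v) = v" using out Let.prems(2)[of v] by (cases "v = x") auto
  qed
  have 3: "\<forall>w\<in>fv_decl (subst_decl (\<sigma>(x := x)) D) - {x}. \<sigma>' w \<noteq> x"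
  proof
    fix w assume "w \<in> fv_decl (subst_decl (\<sigma>(x := x)) D) - {x}"
    then obtain v where "v \<in> fv_decl D" "v \<noteq> x" "w = \<sigma> v" by (auto simp: fv_subst_decl[OF cf])
    with Let.prems(2)[of v] show "\<sigma>' w \<noteq> x" by auto
  qed
  show ?case unfolding subst_decl.simps capture_free_decl.simps using 1 2 3 by (intro conjI)
qed simp_all

lemma subst_decl_inverse:
  "capture_free_decl \<sigma> D \<Longrightarrow> (\<And>v. v \<in> fv_decl D \<Longrightarrow> \<sigma>' (\<sigma> v) = v) \<Longrightarrow> subst_decl \<sigma>' (subst_decl \<sigma> D) = D"
proof -
  assume cf: "capture_free_decl \<sigma> D" and inv: "\<And>v. v \<in> fv_decl D \<Longrightarrow> \<sigma>' (\<sigma> v) = v"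
  have "subst_decl \<sigma>' (subst_decl \<sigma> D) = subst_decl (\<sigma>' \<circ> \<sigma>) D" by (rule subst_comp_decl[OF cf])
  also have "\<dots> = subst_decl (\<lambda>v. v) D" by (rule subst_decl_cong) (simp add: inv)
  finally show ?thesis by simp
qed

lemma capture_free_sub: "bv_decl D \<inter> set zs = {} \<Longrightarrow> length zs = length ys \<Longrightarrow> capture_free_decl (sub ys zs) D"
proof (rule capture_free_if_fresh(2))
  fix v assume "bv_decl D \<inter> set zs = {}" "length zs = length ys" "sub ys zs v \<noteq> v"
  moreover from this have "v \<in> set ys" unfolding sub_eq_upds using upds_notin by metis
  ultimately show "sub ys zs v \<notin> bv_decl D"
    using map_of_zip_first_index[of v ys zs] by (auto simp: sub_eq_upds upds_in)
qed

section \<open>Lax typing\<close>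

definition env_upds :: "env \<Rightarrow> nat list \<Rightarrow> vty list \<Rightarrow> env" where
  "env_upds \<Gamma> ys Ts v = (case map_of (zip ys Ts) v of Some T \<Rightarrow> Some T | None \<Rightarrow> \<Gamma> v)"

lemma env_upds_in: "v \<in> set ys \<Longrightarrow> length ys = length Ts \<Longrightarrow> env_upds \<Gamma> ys Ts v = Some (Ts ! first_index ys v)"
  using map_of_zip_first_index[of v ys Ts] by (simp add: env_upds_def)

lemma env_upds_notin: "v \<notin> set ys \<Longrightarrow> env_upds \<Gamma> ys Ts v = \<Gamma> v"
  by (simp add: env_upds_def map_of_zip_notin)

lemma map_upds_eq_env_upds: "distinct ys \<Longrightarrow> length ys = length Ts \<Longrightarrow> \<Gamma>(ys [\<mapsto>] Ts) = env_upds \<Gamma> ys Ts"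
proof (induction ys arbitrary: Ts \<Gamma>)
  case Nil
  then show ?case by (auto simp: env_upds_def)
next
  case (Cons y ys)
  then obtain T Ts' where Ts: "Ts = T # Ts'" by (cases Ts) auto
  have "\<Gamma>(y # ys [\<mapsto>] Ts) = env_upds (\<Gamma>(y \<mapsto> T)) ys Ts'" using Cons Ts by simp
  also have "\<dots> = env_upds \<Gamma> (y # ys) Ts"
    using Cons(2) by (auto simp: env_upds_def Ts fun_eq_iff map_of_zip_notin split: option.splits)
  finally show ?case .
qed

text \<open>A laxer typing than \<open>typ_decl\<close>: a binding whose variable is dropped from the environment
  (rule \<open>lt_unused\<close>) need not be typable. This makes typing invariant under garbage collection
  of bindings, which \<open>\<equiv>\<close> allows for arbitrary, even ill-typed, values.\<close>

inductive ltyp_decl :: "env \<Rightarrow> decl \<Rightarrow> ty \<Rightarrow> bool" and ltyp_val :: "env \<Rightarrow> val \<Rightarrow> vty \<Rightarrow> bool" where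
  lt_body: "typ_tm \<Gamma> M \<alpha> \<Longrightarrow> ltyp_decl \<Gamma> (Body M) \<alpha>"
| lt_let: "u \<noteq> UZero \<Longrightarrow> ltyp_val \<Gamma> V T \<Longrightarrow> ltyp_decl (\<Gamma>(x \<mapsto> T)) D \<alpha> \<Longrightarrow> ltyp_decl \<Gamma> (Let u x V D) \<alpha>"
| lt_zero: "ltyp_decl (\<Gamma>(x \<mapsto> T)) D \<alpha> \<Longrightarrow> ltyp_decl \<Gamma> (Let UZero x V D) \<alpha>"
| lt_unused: "ltyp_decl (\<Gamma>(x := None)) D \<alpha> \<Longrightarrow> ltyp_decl \<Gamma> (Let u x V D) \<alpha>"
| lt_star: "ltyp_val \<Gamma> Star VUnit"
| lt_lam: "length ys = length (A # As) \<Longrightarrow> ltyp_decl (env_upds \<Gamma> ys (A # As)) D \<beta> \<Longrightarrow>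
    ltyp_val \<Gamma> (Lam ys D) (VArr A As \<beta>)"

inductive_cases ltyp_BodyE: "ltyp_decl \<Gamma> (Body M) \<alpha>"
inductive_cases ltyp_LetE: "ltyp_decl \<Gamma> (Let u x V D) \<alpha>"

lemma ltyp_Body_iff: "ltyp_decl \<Gamma> (Body M) \<alpha> \<longleftrightarrow> typ_tm \<Gamma> M \<alpha>"
  using ltyp_BodyE lt_body by blast

lemma ltyp_Lam_iff: "ltyp_val \<Gamma> (Lam ys D) T \<longleftrightarrow>
    (\<exists>A As \<beta>. T = VArr A As \<beta> \<and> length ys = length (A # As) \<and> ltyp_decl (env_upds \<Gamma> ys (A # As)) D \<beta>)"
proof
  assume "ltyp_val \<Gamma> (Lam ys D) T"
  then show "\<exists>A As \<beta>. T = VArr A As \<beta> \<and> length ys = length (A # As) \<and> ltyp_decl (env_upds \<Gamma> ys (A # As)) D \<beta>"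
    by (cases rule: ltyp_val.cases) auto
qed (use lt_lam in blast)

text \<open>The type \<open>ob\<close> that a binding contributes to the environment, \<open>None\<close> if it is unused.\<close>

definition ltyp_binding :: "env \<Rightarrow> usage \<Rightarrow> val \<Rightarrow> vty option \<Rightarrow> bool" where
  "ltyp_binding \<Gamma> u V ob \<longleftrightarrow> (case ob of None \<Rightarrow> True | Some T \<Rightarrow> u = UZero \<or> ltyp_val \<Gamma> V T)"

lemma ltyp_Let_iff: "ltyp_decl \<Gamma> (Let u x V D) \<alpha> \<longleftrightarrow> (\<exists>ob. ltyp_binding \<Gamma> u V ob \<and> ltyp_decl (\<Gamma>(x := ob)) D \<alpha>)"
proof
  assume "ltyp_decl \<Gamma> (Let u x V D) \<alpha>"
  then show "\<exists>ob. ltyp_binding \<Gamma> u V ob \<and> ltyp_decl (\<Gamma>(x := ob)) D \<alpha>"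
    apply (rule ltyp_LetE)
    subgoal for T by (intro exI[of _ "Some T"]) (simp add: ltyp_binding_def)
    subgoal for T by (intro exI[of _ "Some T"]) (simp add: ltyp_binding_def)
    subgoal by (intro exI[of _ None]) (simp add: ltyp_binding_def)
    done
next
  assume "\<exists>ob. ltyp_binding \<Gamma> u V ob \<and> ltyp_decl (\<Gamma>(x := ob)) D \<alpha>"
  then obtain ob where b: "ltyp_binding \<Gamma> u V ob" and D: "ltyp_decl (\<Gamma>(x := ob)) D \<alpha>" by blast
  show "ltyp_decl \<Gamma> (Let u x V D) \<alpha>"
  proof (cases ob)
    case None
    with D show ?thesis by (simp add: lt_unused)
  next
    case (Some T)
    with b D show ?thesis by (cases "u = UZero") (simp_all add: ltyp_binding_def lt_zero lt_let)
  qed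
qed

lemma typ_tm_unique: "typ_tm \<Gamma> M \<alpha> \<Longrightarrow> typ_tm \<Gamma> M \<beta> \<Longrightarrow> \<alpha> = \<beta>"
proof (induction arbitrary: \<beta> rule: typ_tm.induct)
  case (t_app \<Gamma> M A As \<alpha> Ns)
  from t_app.prems obtain A' As' where "typ_tm \<Gamma> M (VT (VArr A' As' \<beta>))" by (auto elim: typ_tm.cases)
  with t_app.IH(1) show ?case by auto
qed (auto elim: typ_tm.cases)

lemma typ_Var_inv: "typ_tm \<Gamma> (Var x) \<alpha> \<Longrightarrow> \<exists>A. \<alpha> = VT A \<and> \<Gamma> x = Some A"
  by (erule typ_tm.cases) auto

lemma typ_App_inv: "typ_tm \<Gamma> (App M Ns) \<gamma> \<Longrightarrow> \<exists>A As. typ_tm \<Gamma> M (VT (VArr A As \<gamma>)) \<and>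
    length Ns = length (A # As) \<and> (\<forall>i<length Ns. typ_tm \<Gamma> (Ns ! i) (VT ((A # As) ! i)))"
  by (erule typ_tm.cases) blast+

lemma typ_tm_subst:
  "typ_tm \<Gamma> M \<alpha> \<Longrightarrow> \<forall>v\<in>fv_tm M. \<Gamma>' (\<sigma> v) = \<Gamma> v \<Longrightarrow> typ_tm \<Gamma>' (subst_tm \<sigma> M) \<alpha>"
proof (induction rule: typ_tm.induct)
  case (t_app \<Gamma> M A As \<alpha> Ns)
  have "typ_tm \<Gamma>' (subst_tm \<sigma> N) (VT ((A # As) ! i))" if "i < length Ns" "N = Ns ! i" for i N
    using t_app.IH(2) t_app.prems that by (auto dest: nth_mem)
  with t_app show ?case by (auto intro!: typ_tm.t_app)
qed (auto intro: typ_tm.intros)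

lemma env_agree_subst_Let:
  "\<forall>v\<in>fv_decl D - {x}. \<sigma> v \<noteq> x \<Longrightarrow> \<forall>v\<in>fv_decl (Let u x V D). \<Gamma>' (\<sigma> v) = \<Gamma> v \<Longrightarrow>
    \<forall>v\<in>fv_decl D. (\<Gamma>'(x := ob)) ((\<sigma>(x := x)) v) = (\<Gamma>(x := ob)) v"
  by auto

lemma ltyp_subst:
  "ltyp_decl \<Gamma> D \<alpha> \<Longrightarrow> capture_free_decl \<sigma> D \<Longrightarrow> \<forall>v\<in>fv_decl D. \<Gamma>' (\<sigma> v) = \<Gamma> v \<Longrightarrow>
    ltyp_decl \<Gamma>' (subst_decl \<sigma> D) \<alpha>"
  "ltyp_val \<Gamma> V T \<Longrightarrow> capture_free_val \<sigma> V \<Longrightarrow> \<forall>v\<in>fv_val V. \<Gamma>' (\<sigma> v) = \<Gamma> v \<Longrightarrow>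
    ltyp_val \<Gamma>' (subst_val \<sigma> V) T"
proof (induction arbitrary: \<Gamma>' \<sigma> and \<Gamma>' \<sigma> rule: ltyp_decl_ltyp_val.inducts)
  case (lt_body \<Gamma> M \<alpha>)
  then show ?case by (simp add: ltyp_decl_ltyp_val.lt_body typ_tm_subst)
next
  case (lt_let u \<Gamma> V T x D \<alpha>)
  have cf: "capture_free_val \<sigma> V" "capture_free_decl (\<sigma>(x := x)) D" "\<forall>v\<in>fv_decl D - {x}. \<sigma> v \<noteq> x"
    using lt_let.prems(1) unfolding capture_free_decl.simps by blast+
  have "ltyp_decl (\<Gamma>'(x := Some T)) (subst_decl (\<sigma>(x := x)) D) \<alpha>"
    by (rule lt_let.IH(2)[OF cf(2) env_agree_subst_Let[OF cf(3) lt_let.prems(2)]])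
  moreover have "ltyp_val \<Gamma>' (subst_val \<sigma> V) T" using lt_let.prems(2) by (intro lt_let.IH(1)[OF cf(1)]) auto
  ultimately show ?case using lt_let.hyps by (auto intro: ltyp_decl_ltyp_val.intros)
next
  case (lt_zero \<Gamma> x T D \<alpha> V)
  have cf: "capture_free_decl (\<sigma>(x := x)) D" "\<forall>v\<in>fv_decl D - {x}. \<sigma> v \<noteq> x"
    using lt_zero.prems(1) unfolding capture_free_decl.simps by blast+
  have "ltyp_decl (\<Gamma>'(x := Some T)) (subst_decl (\<sigma>(x := x)) D) \<alpha>"
    by (rule lt_zero.IH[OF cf(1) env_agree_subst_Let[OF cf(2) lt_zero.prems(2)]])
  then show ?case by (auto intro: ltyp_decl_ltyp_val.intros)
next
  case (lt_unused \<Gamma> x D \<alpha> u V)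
  have cf: "capture_free_decl (\<sigma>(x := x)) D" "\<forall>v\<in>fv_decl D - {x}. \<sigma> v \<noteq> x"
    using lt_unused.prems(1) unfolding capture_free_decl.simps by blast+
  have "ltyp_decl (\<Gamma>'(x := None)) (subst_decl (\<sigma>(x := x)) D) \<alpha>"
    by (rule lt_unused.IH[OF cf(1) env_agree_subst_Let[OF cf(2) lt_unused.prems(2)]])
  then show ?case by (auto intro: ltyp_decl_ltyp_val.intros)
next
  case (lt_star \<Gamma>)
  then show ?case by (auto intro: ltyp_decl_ltyp_val.intros)
next
  case (lt_lam ys A As \<Gamma> D \<beta>)
  let ?s = "\<lambda>v. if v \<in> set ys then v else \<sigma> v"
  have "ltyp_decl (env_upds \<Gamma>' ys (A # As)) (subst_decl ?s D) \<beta>"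
  proof (rule lt_lam.IH)
    show "capture_free_decl ?s D" using lt_lam.prems by simp
    show "\<forall>v\<in>fv_decl D. env_upds \<Gamma>' ys (A # As) (?s v) = env_upds \<Gamma> ys (A # As) v"
      using lt_lam.hyps lt_lam.prems by (auto simp: env_upds_in env_upds_notin)
  qed
  then show ?case using lt_lam.hyps by (auto intro: ltyp_decl_ltyp_val.intros)
qed

lemma ltyp_decl_weaken: "ltyp_decl \<Gamma> D \<alpha> \<Longrightarrow> \<forall>v\<in>fv_decl D. \<Gamma>' v = \<Gamma> v \<Longrightarrow> ltyp_decl \<Gamma>' D \<alpha>"
  using ltyp_subst(1)[where \<sigma> = "\<lambda>v. v"] by simp

lemma ltyp_val_weaken: "ltyp_val \<Gamma> V T \<Longrightarrow> \<forall>v\<in>fv_val V. \<Gamma>' v = \<Gamma> v \<Longrightarrow> ltyp_val \<Gamma>' V T"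
  using ltyp_subst(2)[where \<sigma> = "\<lambda>v. v"] by simp

lemma typ_tm_weaken: "typ_tm \<Gamma> M \<alpha> \<Longrightarrow> \<forall>v\<in>fv_tm M. \<Gamma>' v = \<Gamma> v \<Longrightarrow> typ_tm \<Gamma>' M \<alpha>"
  using typ_tm_subst[where \<sigma> = "\<lambda>v. v"] by simp

lemma ltyp_binding_weaken:
  "ltyp_binding \<Gamma> u V ob \<Longrightarrow> \<forall>v\<in>fv_val V. \<Gamma>' v = \<Gamma> v \<Longrightarrow> ltyp_binding \<Gamma>' u V ob"
  by (auto simp: ltyp_binding_def ltyp_val_weaken split: option.splits)

lemma typ_decl_ltyp: "typ_decl \<Gamma> D \<alpha> \<Longrightarrow> wf_decl D \<Longrightarrow> ltyp_decl \<Gamma> D \<alpha>"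
proof (induction rule: typ_decl.induct)
  case (t_body \<Gamma> M \<alpha>)
  then show ?case by (auto intro: lt_body)
next
  case (t_star \<Gamma> x D \<alpha>)
  then show ?case by (intro lt_let[where T = VUnit]) (auto intro: lt_star simp: fun_upd_def)
next
  case (t_lam u ys A As \<Gamma> D' \<alpha>' x D \<alpha>)
  then have "ltyp_decl (env_upds \<Gamma> ys (A # As)) D' \<alpha>'" using map_upds_eq_env_upds by fastforce
  with t_lam show ?case by (intro lt_let[where T = "VArr A As \<alpha>'"]) (auto intro: lt_lam simp: fun_upd_def)
next
  case (t_zero V \<Gamma> x A As \<alpha>' D \<alpha>)
  then show ?case by (intro lt_zero[where T = "VArr A As \<alpha>'"]) (auto simp: fun_upd_def)
qed

section \<open>The fundamental lemma\<close>

definition env_approx_on :: "env \<Rightarrow> nat set \<Rightarrow> (nat \<Rightarrow> clo) \<Rightarrow> (nat \<Rightarrow> clo) \<Rightarrow> bool" where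
  "env_approx_on \<Gamma> S \<rho> \<rho>' \<longleftrightarrow>
     (\<forall>v\<in>S. \<forall>A. \<Gamma> v = Some A \<longrightarrow> approx A (\<rho> v) (\<rho>' v) \<and> approx A (\<rho>' v) (\<rho>' v))"

abbreviation env_approx :: "env \<Rightarrow> (nat \<Rightarrow> clo) \<Rightarrow> (nat \<Rightarrow> clo) \<Rightarrow> bool" where
  "env_approx \<Gamma> \<rho> \<rho>' \<equiv> env_approx_on \<Gamma> UNIV \<rho> \<rho>'"

lemma env_approx_on_mono: "env_approx_on \<Gamma> S \<rho> \<rho>' \<Longrightarrow> S' \<subseteq> S \<Longrightarrow> env_approx_on \<Gamma> S' \<rho> \<rho>'"
  by (auto simp: env_approx_on_def)

lemma env_approx_on_right: "env_approx_on \<Gamma> S \<rho> \<rho>' \<Longrightarrow> env_approx_on \<Gamma> S \<rho>' \<rho>'"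
  by (auto simp: env_approx_on_def)

lemma env_approx_on_cong:
  "env_approx_on \<Gamma> S \<rho> \<rho>' \<Longrightarrow> (\<And>v. v \<in> S \<Longrightarrow> \<rho>a v = \<rho> v \<and> \<rho>b v = \<rho>' v) \<Longrightarrow> env_approx_on \<Gamma> S \<rho>a \<rho>b"
  by (auto simp: env_approx_on_def)

lemma env_approx_Stuck: "env_approx \<Gamma> (\<lambda>_. Stuck) (\<lambda>_. Stuck)"
  by (simp add: env_approx_on_def approx_Stuck)

lemma env_approx_on_bind:
  assumes "env_approx_on \<Gamma> (S - {x}) (\<rho> \<circ> \<sigma>) (\<rho>' \<circ> \<sigma>')"
    and "\<forall>v\<in>S - {x}. \<sigma> v \<noteq> x \<and> \<sigma>' v \<noteq> x"
    and "\<And>A. ob = Some A \<Longrightarrow> approx A c c' \<and> approx A c' c'"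
  shows "env_approx_on (\<Gamma>(x := ob)) S (\<rho>(x := c) \<circ> \<sigma>(x := x)) (\<rho>'(x := c') \<circ> \<sigma>'(x := x))"
  using assms unfolding env_approx_on_def by auto

lemma env_approx_on_upds:
  assumes "env_approx_on \<Gamma> (S - set ys) (\<rho> \<circ> \<sigma>) (\<rho>' \<circ> \<sigma>')"
    and "\<forall>v\<in>S - set ys. \<sigma> v \<notin> set ys \<and> \<sigma>' v \<notin> set ys"
    and "approx_args Ts vs vs'" and "length ys = length Ts"
  shows "env_approx_on (env_upds \<Gamma> ys Ts) S
    (upds \<rho> ys vs \<circ> (\<lambda>v. if v \<in> set ys then v else \<sigma> v)) (upds \<rho>' ys vs' \<circ> (\<lambda>v. if v \<in> set ys then v else \<sigma>' v))"
  unfolding env_approx_on_def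
proof (intro ballI allI impI)
  fix v B assume v: "v \<in> S" and B: "env_upds \<Gamma> ys Ts v = Some B"
  note args = approx_args_nth[OF assms(3)]
  show "approx B ((upds \<rho> ys vs \<circ> (\<lambda>v. if v \<in> set ys then v else \<sigma> v)) v)
      ((upds \<rho>' ys vs' \<circ> (\<lambda>v. if v \<in> set ys then v else \<sigma>' v)) v) \<and>
    approx B ((upds \<rho>' ys vs' \<circ> (\<lambda>v. if v \<in> set ys then v else \<sigma>' v)) v)
      ((upds \<rho>' ys vs' \<circ> (\<lambda>v. if v \<in> set ys then v else \<sigma>' v)) v)"
  proof (cases "v \<in> set ys")
    case True
    with assms(4) have "first_index ys v < length Ts" using map_of_zip_first_index[of v ys Ts] by simp
    with True B args assms(4) show ?thesis by (auto simp: upds_in env_upds_in)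
  next
    case False
    with v assms(1,2) B show ?thesis by (simp add: upds_notin env_upds_notin env_approx_on_def)
  qed
qed

lemma ev_tms_approx:
  assumes "length Ns = length Ts" and "length Ns' = length Ts"
    and "\<forall>i<length Ts. approx_ev (\<delta> i) (VT (Ts ! i)) (ev_tm \<rho> (Ns ! i)) (ev_tm \<rho>' (Ns' ! i))"
  shows "\<exists>k vs k' vs'. ev_tms \<rho> Ns k vs \<and> ev_tms \<rho>' Ns' k' vs' \<and> k' + (\<Sum>i<length Ts. \<delta> i) \<le> k \<and>
    approx_args Ts vs vs'"
  using assms
proof (induction Ts arbitrary: Ns Ns' \<delta>)
  case Nil
  then show ?case by (auto intro: ev_nil)
next
  case (Cons T Ts)
  then obtain N Ns1 N' Ns1' where NN: "Ns = N # Ns1" "Ns' = N' # Ns1'" by (cases Ns; cases Ns') auto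
  from Cons.prems(3)[rule_format, of 0] obtain n v n' v'
    where hd: "ev_tm \<rho> N n v" "ev_tm \<rho>' N' n' v'" "n' + \<delta> 0 \<le> n" "approx T v v'" "approx T v' v'"
    by (auto simp: NN approx_ev_def)
  have "\<forall>i<length Ts. approx_ev (\<delta> (Suc i)) (VT (Ts ! i)) (ev_tm \<rho> (Ns1 ! i)) (ev_tm \<rho>' (Ns1' ! i))"
    using Cons.prems(3) by (auto simp: NN)
  moreover have "length Ns1 = length Ts" "length Ns1' = length Ts" using Cons.prems(1,2) NN by simp_all
  ultimately obtain k vs k' vs'
    where tl: "ev_tms \<rho> Ns1 k vs" "ev_tms \<rho>' Ns1' k' vs'" "k' + (\<Sum>i<length Ts. \<delta> (Suc i)) \<le> k"
      "approx_args Ts vs vs'"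
    using Cons.IH[of Ns1 Ns1' "\<delta> \<circ> Suc"] by auto
  have "ev_tms \<rho> Ns (n + k) (v # vs)" "ev_tms \<rho>' Ns' (n' + k') (v' # vs')"
    using hd tl NN by (auto intro: ev_cons)
  moreover have "n' + k' + (\<Sum>i<length (T # Ts). \<delta> i) \<le> n + k"
    using hd(3) tl(3) unfolding length_Cons sum.lessThan_Suc_shift by simp
  moreover have "approx_args (T # Ts) (v # vs) (v' # vs')" using hd tl by simp
  ultimately show ?case by blast
qed

lemma approx_ev_Par:
  "approx_ev d1 Beh (ev_tm \<rho> M1) (ev_tm \<rho>' M1') \<Longrightarrow> approx_ev d2 Beh (ev_tm \<rho> M2) (ev_tm \<rho>' M2') \<Longrightarrow>
    approx_ev (d1 + d2) Beh (ev_tm \<rho> (Par M1 M2)) (ev_tm \<rho>' (Par M1' M2'))"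
  unfolding approx_ev_def by (fastforce intro: ev_par)

lemma approx_ev_App:
  assumes head: "approx_ev d (VT (VArr A As \<gamma>)) (ev_tm \<rho> M) (ev_tm \<rho>' M')"
    and "length Ns = length (A # As)" and "length Ns' = length (A # As)"
    and "\<forall>i<length (A # As). approx_ev (\<delta> i) (VT ((A # As) ! i)) (ev_tm \<rho> (Ns ! i)) (ev_tm \<rho>' (Ns' ! i))"
  shows "approx_ev (d + (\<Sum>i<length (A # As). \<delta> i)) \<gamma> (ev_tm \<rho> (App M Ns)) (ev_tm \<rho>' (App M' Ns'))"
proof -
  from head obtain n c n' c' where f: "ev_tm \<rho> M n c" "ev_tm \<rho>' M' n' c'" "n' + d \<le> n"
      "approx (VArr A As \<gamma>) c c'"
    unfolding approx_ev_def by auto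
  from ev_tms_approx[OF assms(2-4)] obtain k vs k' vs' where a: "ev_tms \<rho> Ns k vs" "ev_tms \<rho>' Ns' k' vs'"
      "k' + (\<Sum>i<length (A # As). \<delta> i) \<le> k" "approx_args (A # As) vs vs'"
    by blast
  from f(4) a(4) have "approx_ev 0 \<gamma> (call c vs) (call c' vs')" by (simp add: approx_VArr)
  then obtain m r m' r' where c: "call c vs m r" "call c' vs' m' r'" "m' \<le> m"
      "approx_ty \<gamma> r r'" "approx_ty \<gamma> r' r'"
    unfolding approx_ev_def by auto
  have "n' + k' + m' + (d + (\<Sum>i<length (A # As). \<delta> i)) \<le> n + k + m" using f(3) a(3) c(3) by simp
  with ev_app[OF f(1) a(1) c(1)] ev_app[OF f(2) a(2) c(2)] show ?thesis
    using c(4,5) by (rule approx_evI)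
qed

lemma fundamental_tm:
  "typ_tm \<Gamma> M \<alpha> \<Longrightarrow> env_approx_on \<Gamma> (fv_tm M) (\<rho> \<circ> \<sigma>) (\<rho>' \<circ> \<sigma>') \<Longrightarrow>
    approx_ev 0 \<alpha> (ev_tm \<rho> (subst_tm \<sigma> M)) (ev_tm \<rho>' (subst_tm \<sigma>' M))"
proof (induction rule: typ_tm.induct)
  case (t_var \<Gamma> x A)
  have "ev_tm \<rho> (subst_tm \<sigma> (Var x)) 0 (\<rho> (\<sigma> x))" "ev_tm \<rho>' (subst_tm \<sigma>' (Var x)) 0 (\<rho>' (\<sigma>' x))"
    by (simp_all add: ev_var)
  moreover have "0 + 0 \<le> (0::nat)" by simp
  moreover have "approx_ty (VT A) (\<rho> (\<sigma> x)) (\<rho>' (\<sigma>' x))" "approx_ty (VT A) (\<rho>' (\<sigma>' x)) (\<rho>' (\<sigma>' x))"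
    using t_var by (simp_all add: env_approx_on_def)
  ultimately show ?case by (rule approx_evI)
next
  case (t_app \<Gamma> M A As \<alpha> Ns)
  have "approx_ev 0 (VT (VArr A As \<alpha>)) (ev_tm \<rho> (subst_tm \<sigma> M)) (ev_tm \<rho>' (subst_tm \<sigma>' M))"
    by (rule t_app.IH(1), rule env_approx_on_mono[OF t_app.prems]) auto
  moreover have "\<forall>i<length (A # As). approx_ev 0 (VT ((A # As) ! i))
      (ev_tm \<rho> (map (subst_tm \<sigma>) Ns ! i)) (ev_tm \<rho>' (map (subst_tm \<sigma>') Ns ! i))"
  proof (intro allI impI)
    fix i assume "i < length (A # As)"
    with t_app.hyps(2) have i: "i < length Ns" by simp
    then have "env_approx_on \<Gamma> (fv_tm (Ns ! i)) (\<rho> \<circ> \<sigma>) (\<rho>' \<circ> \<sigma>')"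
      by (intro env_approx_on_mono[OF t_app.prems]) (auto dest: nth_mem)
    with t_app.IH(2) i show "approx_ev 0 (VT ((A # As) ! i))
        (ev_tm \<rho> (map (subst_tm \<sigma>) Ns ! i)) (ev_tm \<rho>' (map (subst_tm \<sigma>') Ns ! i))"
      by (simp del: comp_apply)
  qed
  ultimately show ?case using approx_ev_App[where \<delta> = "\<lambda>_. 0"] t_app.hyps(2) by simp
next
  case (t_par \<Gamma> M1 M2)
  have "approx_ev 0 Beh (ev_tm \<rho> (subst_tm \<sigma> M1)) (ev_tm \<rho>' (subst_tm \<sigma>' M1))"
    "approx_ev 0 Beh (ev_tm \<rho> (subst_tm \<sigma> M2)) (ev_tm \<rho>' (subst_tm \<sigma>' M2))"
    by (rule t_par.IH(1) t_par.IH(2), rule env_approx_on_mono[OF t_par.prems], simp)+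
  from approx_ev_Par[OF this] show ?case by simp
qed

lemma approx_ev_Let:
  "approx_ev d \<alpha> (ev_decl (\<rho>(x := bind_closure u \<rho> V)) D) (ev_decl (\<rho>'(x' := bind_closure u' \<rho>' V')) D') \<Longrightarrow>
    approx_ev d \<alpha> (ev_decl \<rho> (Let u x V D)) (ev_decl \<rho>' (Let u' x' V' D'))"
  by (simp add: approx_ev_def ev_Let_iff)

lemma approx_ev_Body:
  "approx_ev d \<alpha> (ev_decl \<rho> (Body M)) (ev_decl \<rho>' (Body M')) \<longleftrightarrow> approx_ev d \<alpha> (ev_tm \<rho> M) (ev_tm \<rho>' M')"
  by (simp add: approx_ev_def ev_Body_iff)

lemma approx_Clo:
  assumes "length ys = length (A # As)" and "length ys' = length (A # As)"
    and body: "\<And>vs vs'. approx_args (A # As) vs vs' \<Longrightarrow>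
      approx_ev 0 \<beta> (ev_decl (upds \<rho> ys vs) D) (ev_decl (upds \<rho>' ys' vs') D')"
  shows "approx (VArr A As \<beta>) (Clo ys D \<rho>) (Clo ys' D' \<rho>')"
  unfolding approx_VArr
proof (intro allI impI)
  fix vs vs' assume vs: "approx_args (A # As) vs vs'"
  from body[OF vs] obtain m r m' r' where e: "ev_decl (upds \<rho> ys vs) D m r" "ev_decl (upds \<rho>' ys' vs') D' m' r'"
      "m' \<le> m" "approx_ty \<beta> r r'" "approx_ty \<beta> r' r'"
    unfolding approx_ev_def by auto
  have "length vs = length ys" "length vs' = length ys'" using approx_args_nth[OF vs] assms(1,2) by auto
  then have "call (Clo ys D \<rho>) vs (Suc m) r" "call (Clo ys' D' \<rho>') vs' (Suc m') r'"
    using e(1,2) by (auto intro: call_Clo)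
  moreover have "Suc m' + 0 \<le> Suc m" using e(3) by simp
  ultimately show "approx_ev 0 \<beta> (call (Clo ys D \<rho>) vs) (call (Clo ys' D' \<rho>') vs')"
    using e(4,5) by (rule approx_evI)
qed

lemma approx_ev_subst_Let:
  assumes cf: "capture_free_decl \<sigma> (Let u x V D)" "capture_free_decl \<sigma>' (Let u x V D)"
    and env: "env_approx_on \<Gamma> (fv_decl (Let u x V D)) (\<rho> \<circ> \<sigma>) (\<rho>' \<circ> \<sigma>')"
    and bound: "\<And>A. ob = Some A \<Longrightarrow>
      approx A (bind_closure u \<rho> (subst_val \<sigma> V)) (bind_closure u \<rho>' (subst_val \<sigma>' V)) \<and>
      approx A (bind_closure u \<rho>' (subst_val \<sigma>' V)) (bind_closure u \<rho>' (subst_val \<sigma>' V))"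
    and body: "\<And>\<rho> \<rho>' \<sigma> \<sigma>'. capture_free_decl \<sigma> D \<Longrightarrow> capture_free_decl \<sigma>' D \<Longrightarrow>
      env_approx_on (\<Gamma>(x := ob)) (fv_decl D) (\<rho> \<circ> \<sigma>) (\<rho>' \<circ> \<sigma>') \<Longrightarrow>
      approx_ev 0 \<alpha> (ev_decl \<rho> (subst_decl \<sigma> D)) (ev_decl \<rho>' (subst_decl \<sigma>' D))"
  shows "approx_ev 0 \<alpha> (ev_decl \<rho> (subst_decl \<sigma> (Let u x V D))) (ev_decl \<rho>' (subst_decl \<sigma>' (Let u x V D)))"
proof -
  have cf_body: "capture_free_decl (\<sigma>(x := x)) D" "capture_free_decl (\<sigma>'(x := x)) D"
    and shadow: "\<forall>v\<in>fv_decl D - {x}. \<sigma> v \<noteq> x \<and> \<sigma>' v \<noteq> x"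
    using cf unfolding capture_free_decl.simps by blast+
  have "env_approx_on \<Gamma> (fv_decl D - {x}) (\<rho> \<circ> \<sigma>) (\<rho>' \<circ> \<sigma>')" by (rule env_approx_on_mono[OF env]) auto
  from env_approx_on_bind[OF this shadow bound]
  have "env_approx_on (\<Gamma>(x := ob)) (fv_decl D) (\<rho>(x := bind_closure u \<rho> (subst_val \<sigma> V)) \<circ> \<sigma>(x := x))
      (\<rho>'(x := bind_closure u \<rho>' (subst_val \<sigma>' V)) \<circ> \<sigma>'(x := x))" .
  from body[OF cf_body this] show ?thesis unfolding subst_decl.simps by (rule approx_ev_Let)
qed

text \<open>Stated for two capture-free renamings at once, which is what handles \<open>\<alpha>\<close>-conversion later.\<close>

lemma fundamental:
  "ltyp_decl \<Gamma> D \<alpha> \<Longrightarrow> capture_free_decl \<sigma> D \<Longrightarrow> capture_free_decl \<sigma>' D \<Longrightarrow>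
    env_approx_on \<Gamma> (fv_decl D) (\<rho> \<circ> \<sigma>) (\<rho>' \<circ> \<sigma>') \<Longrightarrow>
    approx_ev 0 \<alpha> (ev_decl \<rho> (subst_decl \<sigma> D)) (ev_decl \<rho>' (subst_decl \<sigma>' D))"
  "ltyp_val \<Gamma> V T \<Longrightarrow> capture_free_val \<sigma> V \<Longrightarrow> capture_free_val \<sigma>' V \<Longrightarrow>
    env_approx_on \<Gamma> (fv_val V) (\<rho> \<circ> \<sigma>) (\<rho>' \<circ> \<sigma>') \<Longrightarrow>
    approx T (closure \<rho> (subst_val \<sigma> V)) (closure \<rho>' (subst_val \<sigma>' V))"
proof (induction arbitrary: \<rho> \<rho>' \<sigma> \<sigma>' and \<rho> \<rho>' \<sigma> \<sigma>' rule: ltyp_decl_ltyp_val.inducts)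
  case (lt_body \<Gamma> M \<alpha>)
  have "approx_ev 0 \<alpha> (ev_tm \<rho> (subst_tm \<sigma> M)) (ev_tm \<rho>' (subst_tm \<sigma>' M))"
    using lt_body.prems(3) by (intro fundamental_tm[OF lt_body.hyps]) (simp add: comp_def)
  then show ?case by (simp add: approx_ev_Body)
next
  case (lt_let u \<Gamma> V T x D \<alpha>)
  have cf: "capture_free_val \<sigma> V" "capture_free_val \<sigma>' V"
    using lt_let.prems(1,2) unfolding capture_free_decl.simps by blast+
  have env: "env_approx_on \<Gamma> (fv_val V) (\<rho> \<circ> \<sigma>) (\<rho>' \<circ> \<sigma>')"
    by (rule env_approx_on_mono[OF lt_let.prems(3)]) auto
  have closures: "approx T (closure \<rho> (subst_val \<sigma> V)) (closure \<rho>' (subst_val \<sigma>' V))"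
    "approx T (closure \<rho>' (subst_val \<sigma>' V)) (closure \<rho>' (subst_val \<sigma>' V))"
    by (rule lt_let.IH(1)[OF cf env], rule lt_let.IH(1)[OF cf(2) cf(2) env_approx_on_right[OF env]])
  have "approx A (bind_closure u \<rho> (subst_val \<sigma> V)) (bind_closure u \<rho>' (subst_val \<sigma>' V)) \<and>
      approx A (bind_closure u \<rho>' (subst_val \<sigma>' V)) (bind_closure u \<rho>' (subst_val \<sigma>' V))"
    if "Some T = Some A" for A
    using that closures lt_let.hyps(1) by (simp add: bind_closure_def)
  from approx_ev_subst_Let[OF lt_let.prems this lt_let.IH(2)] show ?case .
next
  case (lt_zero \<Gamma> x T D \<alpha> V)
  have "approx A (bind_closure UZero \<rho> (subst_val \<sigma> V)) (bind_closure UZero \<rho>' (subst_val \<sigma>' V)) \<and>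
      approx A (bind_closure UZero \<rho>' (subst_val \<sigma>' V)) (bind_closure UZero \<rho>' (subst_val \<sigma>' V))"
    if "Some T = Some A" for A
    by (simp add: bind_closure_def approx_Stuck)
  from approx_ev_subst_Let[OF lt_zero.prems this lt_zero.IH] show ?case .
next
  case (lt_unused \<Gamma> x D \<alpha> u V)
  have "approx A (bind_closure u \<rho> (subst_val \<sigma> V)) (bind_closure u \<rho>' (subst_val \<sigma>' V)) \<and>
      approx A (bind_closure u \<rho>' (subst_val \<sigma>' V)) (bind_closure u \<rho>' (subst_val \<sigma>' V))"
    if "None = Some A" for A
    using that by simp
  from approx_ev_subst_Let[OF lt_unused.prems this lt_unused.IH] show ?case .
next
  case (lt_star \<Gamma>)
  then show ?case by (simp add: closure_def)
next
  case (lt_lam ys A As \<Gamma> D \<beta>)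
  let ?s = "\<lambda>v. if v \<in> set ys then v else \<sigma> v" and ?s' = "\<lambda>v. if v \<in> set ys then v else \<sigma>' v"
  have cf: "capture_free_decl ?s D" "capture_free_decl ?s' D" "\<forall>v\<in>fv_decl D - set ys. \<sigma> v \<notin> set ys \<and> \<sigma>' v \<notin> set ys"
    using lt_lam.prems(1,2) by auto
  have env: "env_approx_on \<Gamma> (fv_decl D - set ys) (\<rho> \<circ> \<sigma>) (\<rho>' \<circ> \<sigma>')"
    using lt_lam.prems(3) by (simp add: comp_def)
  have "approx (VArr A As \<beta>) (Clo ys (subst_decl ?s D) \<rho>) (Clo ys (subst_decl ?s' D) \<rho>')"
    using lt_lam.hyps(1)
    by (intro approx_Clo lt_lam.IH[OF cf(1,2)] env_approx_on_upds[OF env cf(3)]) simp_all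
  then show ?case by (simp add: closure_def)
qed

lemma fundamental_decl: "ltyp_decl \<Gamma> D \<alpha> \<Longrightarrow> env_approx_on \<Gamma> (fv_decl D) \<rho> \<rho>' \<Longrightarrow>
    approx_ev 0 \<alpha> (ev_decl \<rho> D) (ev_decl \<rho>' D)"
  using fundamental(1)[of \<Gamma> D \<alpha> "\<lambda>v. v" "\<lambda>v. v" \<rho> \<rho>'] by (simp add: comp_def)

lemma fundamental_val: "ltyp_val \<Gamma> V T \<Longrightarrow> env_approx_on \<Gamma> (fv_val V) \<rho> \<rho>' \<Longrightarrow>
    approx T (closure \<rho> V) (closure \<rho>' V)"
  using fundamental(2)[of \<Gamma> V T "\<lambda>v. v" "\<lambda>v. v" \<rho> \<rho>'] by (simp add: comp_def)

lemma approx_bind_closure: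
  assumes "ltyp_binding \<Gamma> u V (Some T)" and "env_approx_on \<Gamma> (fv_val V) \<rho> \<rho>'"
  shows "approx T (bind_closure u \<rho> V) (bind_closure u \<rho>' V)"
  using assms fundamental_val by (auto simp: ltyp_binding_def bind_closure_def approx_Stuck)

lemma env_approx_bind:
  assumes "env_approx \<Gamma> \<rho> \<rho>'" and "ltyp_binding \<Gamma> u V ob" and "ltyp_binding \<Gamma> u V' ob"
    and "\<And>T. ob = Some T \<Longrightarrow> approx T (bind_closure u \<rho> V) (bind_closure u \<rho>' V')"
  shows "env_approx (\<Gamma>(x := ob)) (\<rho>(x := bind_closure u \<rho> V)) (\<rho>'(x := bind_closure u \<rho>' V'))"
proof -
  have "approx T (bind_closure u \<rho>' V') (bind_closure u \<rho>' V')" if "ob = Some T" for T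
    using assms(3) that env_approx_on_right[OF assms(1)] by (auto intro: approx_bind_closure env_approx_on_mono)
  with assms(1,4) show ?thesis by (auto simp: env_approx_on_def)
qed

section \<open>Structural congruence preserves typing and cost\<close>

definition decl_approx :: "nat \<Rightarrow> env \<Rightarrow> decl \<Rightarrow> decl \<Rightarrow> ty \<Rightarrow> bool" where
  "decl_approx d \<Gamma> D D' \<alpha> \<longleftrightarrow> (\<forall>\<rho> \<rho>'. env_approx \<Gamma> \<rho> \<rho>' \<longrightarrow> approx_ev d \<alpha> (ev_decl \<rho> D) (ev_decl \<rho>' D'))"

definition val_approx :: "env \<Rightarrow> val \<Rightarrow> val \<Rightarrow> vty \<Rightarrow> bool" where
  "val_approx \<Gamma> V V' T \<longleftrightarrow> (\<forall>\<rho> \<rho>'. env_approx \<Gamma> \<rho> \<rho>' \<longrightarrow> approx T (closure \<rho> V) (closure \<rho>' V'))"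

lemma decl_approx_refl: "ltyp_decl \<Gamma> D \<alpha> \<Longrightarrow> decl_approx 0 \<Gamma> D D \<alpha>"
  unfolding decl_approx_def using fundamental_decl env_approx_on_mono by blast

lemma val_approx_refl: "ltyp_val \<Gamma> V T \<Longrightarrow> val_approx \<Gamma> V V T"
  unfolding val_approx_def using fundamental_val env_approx_on_mono by blast

lemma decl_approx_trans:
  assumes "decl_approx d1 \<Gamma> D1 D2 \<alpha>" and "decl_approx d2 \<Gamma> D2 D3 \<alpha>"
  shows "decl_approx (d1 + d2) \<Gamma> D1 D3 \<alpha>"
  unfolding decl_approx_def
proof (intro allI impI)
  fix \<rho> \<rho>' assume env: "env_approx \<Gamma> \<rho> \<rho>'"
  have "approx_ev d1 \<alpha> (ev_decl \<rho> D1) (ev_decl \<rho>' D2)" using assms(1) env by (simp add: decl_approx_def)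
  moreover have "approx_ev d2 \<alpha> (ev_decl \<rho>' D2) (ev_decl \<rho>' D3)"
    using assms(2) env_approx_on_right[OF env] by (simp add: decl_approx_def)
  ultimately show "approx_ev (d1 + d2) \<alpha> (ev_decl \<rho> D1) (ev_decl \<rho>' D3)"
    using ev_deterministic(4) approx_trans(2) by (rule approx_ev_trans)
qed

lemma val_approx_trans: "val_approx \<Gamma> V1 V2 T \<Longrightarrow> val_approx \<Gamma> V2 V3 T \<Longrightarrow> val_approx \<Gamma> V1 V3 T"
  unfolding val_approx_def by (meson env_approx_on_right approx_trans(1))

lemma decl_approx_Let:
  assumes "ltyp_binding \<Gamma> u V ob" and "ltyp_binding \<Gamma> u V' ob"
    and "\<And>T. ob = Some T \<Longrightarrow> u \<noteq> UZero \<Longrightarrow> val_approx \<Gamma> V V' T"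
    and "decl_approx d (\<Gamma>(x := ob)) D D' \<alpha>"
  shows "decl_approx d \<Gamma> (Let u x V D) (Let u x V' D') \<alpha>"
  unfolding decl_approx_def
proof (intro allI impI)
  fix \<rho> \<rho>' assume env: "env_approx \<Gamma> \<rho> \<rho>'"
  have "approx T (bind_closure u \<rho> V) (bind_closure u \<rho>' V')" if "ob = Some T" for T
    using assms(3)[OF that] env by (cases "u = UZero") (auto simp: bind_closure_def val_approx_def approx_Stuck)
  with env assms(1,2) have "env_approx (\<Gamma>(x := ob)) (\<rho>(x := bind_closure u \<rho> V)) (\<rho>'(x := bind_closure u \<rho>' V'))"
    by (rule env_approx_bind)
  with assms(4) show "approx_ev d \<alpha> (ev_decl \<rho> (Let u x V D)) (ev_decl \<rho>' (Let u x V' D'))"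
    unfolding decl_approx_def by (blast intro: approx_ev_Let)
qed

lemma env_approx_upds:
  assumes "env_approx \<Gamma> \<rho> \<rho>'" and "approx_args Ts vs vs'" and "length ys = length Ts"
  shows "env_approx (env_upds \<Gamma> ys Ts) (upds \<rho> ys vs) (upds \<rho>' ys vs')"
proof -
  have env: "env_approx_on \<Gamma> (UNIV - set ys) (\<rho> \<circ> (\<lambda>v. v)) (\<rho>' \<circ> (\<lambda>v. v))"
    using env_approx_on_mono[OF assms(1), of "UNIV - set ys"] by (simp add: comp_def)
  have "(\<lambda>v. if v \<in> set ys then v else v) = (\<lambda>v. v)" by auto
  then show ?thesis using env_approx_on_upds[OF env _ assms(2,3)] by (simp add: comp_def)
qed

lemma val_approx_Lam:
  assumes "length ys = length (A # As)" and "decl_approx 0 (env_upds \<Gamma> ys (A # As)) D D' \<beta>"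
  shows "val_approx \<Gamma> (Lam ys D) (Lam ys D') (VArr A As \<beta>)"
  unfolding val_approx_def closure_def val.case
proof (intro allI impI)
  fix \<rho> \<rho>' assume env: "env_approx \<Gamma> \<rho> \<rho>'"
  show "approx (VArr A As \<beta>) (Clo ys D \<rho>) (Clo ys D' \<rho>')"
  proof (rule approx_Clo[OF assms(1) assms(1)])
    fix vs vs' assume "approx_args (A # As) vs vs'"
    from env_approx_upds[OF env this assms(1)] assms(2)
    show "approx_ev 0 \<beta> (ev_decl (upds \<rho> ys vs) D) (ev_decl (upds \<rho>' ys vs') D')"
      by (simp add: decl_approx_def)
  qed
qed

definition sem_equiv_decl :: "decl \<Rightarrow> decl \<Rightarrow> bool" where
  "sem_equiv_decl D D' \<longleftrightarrow> (\<forall>\<Gamma> \<alpha>. ltyp_decl \<Gamma> D \<alpha> \<longleftrightarrow> ltyp_decl \<Gamma> D' \<alpha>) \<and>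
     (\<forall>\<Gamma> \<alpha>. ltyp_decl \<Gamma> D \<alpha> \<longrightarrow> decl_approx 0 \<Gamma> D D' \<alpha> \<and> decl_approx 0 \<Gamma> D' D \<alpha>)"

definition sem_equiv_val :: "val \<Rightarrow> val \<Rightarrow> bool" where
  "sem_equiv_val V V' \<longleftrightarrow> (\<forall>\<Gamma> T. ltyp_val \<Gamma> V T \<longleftrightarrow> ltyp_val \<Gamma> V' T) \<and>
     (\<forall>\<Gamma> T. ltyp_val \<Gamma> V T \<longrightarrow> val_approx \<Gamma> V V' T \<and> val_approx \<Gamma> V' V T)"

lemma sem_equiv_gc:
  assumes x: "x \<notin> fv_decl D"
  shows "sem_equiv_decl (Let u x V D) D"
proof -
  have typing: "ltyp_decl \<Gamma> (Let u x V D) \<alpha> \<longleftrightarrow> ltyp_decl \<Gamma> D \<alpha>" for \<Gamma> \<alpha>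
  proof
    assume "ltyp_decl \<Gamma> (Let u x V D) \<alpha>"
    then obtain ob where "ltyp_decl (\<Gamma>(x := ob)) D \<alpha>" by (auto simp: ltyp_Let_iff)
    then show "ltyp_decl \<Gamma> D \<alpha>" by (rule ltyp_decl_weaken) (use x in auto)
  next
    assume "ltyp_decl \<Gamma> D \<alpha>"
    then have "ltyp_decl (\<Gamma>(x := None)) D \<alpha>" by (rule ltyp_decl_weaken) (use x in auto)
    then show "ltyp_decl \<Gamma> (Let u x V D) \<alpha>" by (rule lt_unused)
  qed
  have "decl_approx 0 \<Gamma> (Let u x V D) D \<alpha> \<and> decl_approx 0 \<Gamma> D (Let u x V D) \<alpha>"
    if typed_D: "ltyp_decl \<Gamma> D \<alpha>" for \<Gamma> \<alpha>
    unfolding decl_approx_def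
  proof (intro conjI allI impI)
    fix \<rho> \<rho>' assume env: "env_approx \<Gamma> \<rho> \<rho>'"
    have "env_approx_on \<Gamma> (fv_decl D) (\<rho>(x := bind_closure u \<rho> V)) \<rho>'"
      "env_approx_on \<Gamma> (fv_decl D) \<rho> (\<rho>'(x := bind_closure u \<rho>' V))"
      by (rule env_approx_on_cong[OF env_approx_on_mono[OF env]], use x in auto)+
    from this[THEN fundamental_decl[OF typed_D]]
    show "approx_ev 0 \<alpha> (ev_decl \<rho> (Let u x V D)) (ev_decl \<rho>' D)"
      "approx_ev 0 \<alpha> (ev_decl \<rho> D) (ev_decl \<rho>' (Let u x V D))"
      by (simp_all add: approx_ev_def ev_Let_iff)
  qed
  with typing show ?thesis by (simp add: sem_equiv_decl_def)
qed

lemma sem_equiv_swap_approx: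
  assumes x12: "x1 \<noteq> x2" and x1: "x1 \<notin> fv_val V2" and x2: "x2 \<notin> fv_val V1"
    and typed: "ltyp_decl \<Gamma> (Let u1 x1 V1 (Let u2 x2 V2 D)) \<alpha>"
  shows "ltyp_decl \<Gamma> (Let u2 x2 V2 (Let u1 x1 V1 D)) \<alpha> \<and>
    decl_approx 0 \<Gamma> (Let u1 x1 V1 (Let u2 x2 V2 D)) (Let u2 x2 V2 (Let u1 x1 V1 D)) \<alpha>"
proof -
  from typed obtain ob1 ob2 where b1: "ltyp_binding \<Gamma> u1 V1 ob1" and b2: "ltyp_binding (\<Gamma>(x1 := ob1)) u2 V2 ob2"
    and tD: "ltyp_decl (\<Gamma>(x1 := ob1, x2 := ob2)) D \<alpha>"
    by (auto simp: ltyp_Let_iff)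
  have b2': "ltyp_binding \<Gamma> u2 V2 ob2" using b2 by (rule ltyp_binding_weaken) (use x1 in auto)
  have b1': "ltyp_binding (\<Gamma>(x2 := ob2)) u1 V1 ob1" using b1 by (rule ltyp_binding_weaken) (use x2 in auto)
  have twist: "\<Gamma>(x1 := ob1, x2 := ob2) = \<Gamma>(x2 := ob2, x1 := ob1)" using x12 by (rule fun_upd_twist)
  have "ltyp_decl \<Gamma> (Let u2 x2 V2 (Let u1 x1 V1 D)) \<alpha>"
    using b1' b2' tD twist by (auto simp: ltyp_Let_iff)
  moreover have "decl_approx 0 \<Gamma> (Let u1 x1 V1 (Let u2 x2 V2 D)) (Let u2 x2 V2 (Let u1 x1 V1 D)) \<alpha>"
    unfolding decl_approx_def
  proof (intro allI impI)
    fix \<rho> \<rho>' assume env: "env_approx \<Gamma> \<rho> \<rho>'"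
    define c1 where "c1 = bind_closure u1 \<rho> V1"
    define c2 where "c2 = bind_closure u2 (\<rho>(x1 := c1)) V2"
    define d2 where "d2 = bind_closure u2 \<rho>' V2"
    define d1 where "d1 = bind_closure u1 (\<rho>'(x2 := d2)) V1"
    note env' = env_approx_on_right[OF env]
    have e2: "env_approx_on \<Gamma> (fv_val V2) (\<rho>(x1 := c1)) \<rho>'" "env_approx_on \<Gamma> (fv_val V2) \<rho>' \<rho>'"
      by (rule env_approx_on_cong[OF env_approx_on_mono[OF env]], use x1 in auto)
        (rule env_approx_on_mono[OF env'], simp)
    have e1: "env_approx_on \<Gamma> (fv_val V1) \<rho> (\<rho>'(x2 := d2))"
      "env_approx_on \<Gamma> (fv_val V1) (\<rho>'(x2 := d2)) (\<rho>'(x2 := d2))"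
      by (rule env_approx_on_cong[OF env_approx_on_mono[OF env]], use x2 in auto)
        (rule env_approx_on_cong[OF env_approx_on_mono[OF env']], use x2 in auto)
    have "approx T c2 d2" "approx T d2 d2" if "ob2 = Some T" for T
      unfolding c2_def d2_def using b2' that approx_bind_closure e2 by auto
    moreover have "approx T c1 d1" "approx T d1 d1" if "ob1 = Some T" for T
      unfolding c1_def d1_def using b1 that approx_bind_closure e1 by auto
    ultimately have "env_approx (\<Gamma>(x1 := ob1, x2 := ob2)) (\<rho>(x1 := c1, x2 := c2)) (\<rho>'(x2 := d2, x1 := d1))"
      using env x12 unfolding env_approx_on_def by auto
    with decl_approx_refl[OF tD] show "approx_ev 0 \<alpha> (ev_decl \<rho> (Let u1 x1 V1 (Let u2 x2 V2 D)))
        (ev_decl \<rho>' (Let u2 x2 V2 (Let u1 x1 V1 D)))"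
      unfolding decl_approx_def c1_def c2_def d1_def d2_def by (simp add: approx_ev_def ev_Let_iff)
  qed
  ultimately show ?thesis by blast
qed

lemma sem_equiv_swap: "x1 \<noteq> x2 \<Longrightarrow> x1 \<notin> fv_val V2 \<Longrightarrow> x2 \<notin> fv_val V1 \<Longrightarrow>
    sem_equiv_decl (Let u1 x1 V1 (Let u2 x2 V2 D)) (Let u2 x2 V2 (Let u1 x1 V1 D))"
  unfolding sem_equiv_decl_def by (metis sem_equiv_swap_approx)

lemma upds_self: "upds (\<lambda>v. v) ys ys v = v"
  using map_of_zip_first_index[of v ys ys] by (cases "v \<in> set ys") (simp_all add: upds_def map_of_zip_notin)

lemma upds_sub:
  assumes "length ys' = length ys" and "distinct ys'" and "v \<in> set ys \<or> v \<notin> set ys'"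
    and "length ws = length ys"
  shows "upds f ys' ws (sub ys ys' v) = upds f ys ws v"
proof (cases "v \<in> set ys")
  case True
  let ?i = "first_index ys v"
  have i: "?i < length ys'" "sub ys ys' v = ys' ! ?i"
    using map_of_zip_first_index[OF True, of ys'] assms(1) True by (simp_all add: sub_eq_upds upds_in)
  then have "first_index ys' (sub ys ys' v) = ?i" using assms(2) by (simp add: first_index_nth)
  with i assms(1,4) True show ?thesis by (simp add: upds_in)
next
  case False
  with assms(3) show ?thesis by (simp add: sub_eq_upds upds_notin)
qed

lemma env_upds_sub:
  assumes "length ys' = length ys" and "distinct ys'" and "v \<in> set ys \<or> v \<notin> set ys'"
    and "length Ts = length ys"
  shows "env_upds \<Gamma> ys' Ts (sub ys ys' v) = env_upds \<Gamma> ys Ts v"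
proof (cases "v \<in> set ys")
  case True
  let ?i = "first_index ys v"
  have i: "?i < length ys'" "sub ys ys' v = ys' ! ?i"
    using map_of_zip_first_index[OF True, of ys'] assms(1) True by (simp_all add: sub_eq_upds upds_in)
  then have "first_index ys' (sub ys ys' v) = ?i" using assms(2) by (simp add: first_index_nth)
  with i assms(1,4) True show ?thesis by (simp add: env_upds_in)
next
  case False
  with assms(3) show ?thesis by (simp add: sub_eq_upds upds_notin env_upds_notin)
qed

lemma approx_Clo_renamed:
  fixes sa sb :: "nat \<Rightarrow> nat"
  assumes typed: "ltyp_decl (env_upds \<Gamma> ys (A # As)) D \<beta>" and len: "length ys = length (A # As)"
    and "length ysa = length ys" and "length ysb = length ys"
    and cf: "capture_free_decl sa D" "capture_free_decl sb D"
    and ra: "\<And>v (f :: nat \<Rightarrow> clo) ws. v \<in> fv_decl D \<Longrightarrow> length ws = length ys \<Longrightarrow> upds f ysa ws (sa v) = upds f ys ws v"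
    and rb: "\<And>v (f :: nat \<Rightarrow> clo) ws. v \<in> fv_decl D \<Longrightarrow> length ws = length ys \<Longrightarrow> upds f ysb ws (sb v) = upds f ys ws v"
    and env: "env_approx \<Gamma> \<rho> \<rho>'"
  shows "approx (VArr A As \<beta>) (Clo ysa (subst_decl sa D) \<rho>) (Clo ysb (subst_decl sb D) \<rho>')"
proof (rule approx_Clo)
  show "length ysa = length (A # As)" "length ysb = length (A # As)" using assms(3,4) len by simp_all
next
  fix vs vs' assume vs: "approx_args (A # As) vs vs'"
  then have lens: "length vs = length ys" "length vs' = length ys" using approx_args_nth[OF vs] len by auto
  have "env_approx_on (env_upds \<Gamma> ys (A # As)) (fv_decl D) (upds \<rho> ys vs) (upds \<rho>' ys vs')"
    using env_approx_on_mono[OF env_approx_upds[OF env vs len]] by simp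
  then have "env_approx_on (env_upds \<Gamma> ys (A # As)) (fv_decl D) (upds \<rho> ysa vs \<circ> sa) (upds \<rho>' ysb vs' \<circ> sb)"
    by (rule env_approx_on_cong) (simp add: ra rb lens)
  then show "approx_ev 0 \<beta> (ev_decl (upds \<rho> ysa vs) (subst_decl sa D)) (ev_decl (upds \<rho>' ysb vs') (subst_decl sb D))"
    by (rule fundamental(1)[OF typed cf])
qed

lemma sub_rename_inverse:
  assumes "length ys' = length ys" and "distinct ys'" and "set ys' \<inter> fv_decl D = {}" and "v \<in> fv_decl D"
  shows "sub ys' ys (sub ys ys' v) = v"
  using upds_sub[OF assms(1,2), where f = "\<lambda>v. v" and ws = ys] assms(3,4)
  by (auto simp: sub_eq_upds upds_self)

lemma ltyp_Lam_rename:
  assumes len: "length ys' = length ys" and dist: "distinct ys'"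
    and fresh: "set ys' \<inter> (fv_decl D \<union> bv_decl D) = {}"
  shows "ltyp_val \<Gamma> (Lam ys D) T \<longleftrightarrow> ltyp_val \<Gamma> (Lam ys' (subst_decl (sub ys ys') D)) T"
proof -
  define \<sigma> where "\<sigma> = sub ys ys'"
  define D' where "D' = subst_decl \<sigma> D"
  have cf: "capture_free_decl \<sigma> D" unfolding \<sigma>_def using fresh len by (intro capture_free_sub) auto
  have inv: "sub ys' ys (\<sigma> v) = v" if "v \<in> fv_decl D" for v
    unfolding \<sigma>_def using sub_rename_inverse[OF len dist _ that] fresh by blast
  have cf': "capture_free_decl (sub ys' ys) D'" unfolding D'_def by (rule capture_free_subst_inverse(2)[OF cf inv])
  have undo: "subst_decl (sub ys' ys) D' = D" unfolding D'_def by (rule subst_decl_inverse[OF cf inv])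
  have ren_env: "env_upds \<Gamma> ys' Ts (\<sigma> v) = env_upds \<Gamma> ys Ts v" if "v \<in> fv_decl D" "length Ts = length ys" for Ts v
    unfolding \<sigma>_def using env_upds_sub[OF len dist _ that(2)] fresh that(1) by blast
  show ?thesis unfolding D'_def[symmetric] \<sigma>_def[symmetric]
  proof
    assume "ltyp_val \<Gamma> (Lam ys D) T"
    then obtain A As \<beta> where T: "T = VArr A As \<beta>" "length ys = length (A # As)"
        "ltyp_decl (env_upds \<Gamma> ys (A # As)) D \<beta>"
      by (auto simp: ltyp_Lam_iff)
    have "ltyp_decl (env_upds \<Gamma> ys' (A # As)) D' \<beta>"
      unfolding D'_def using ren_env T(2) by (intro ltyp_subst(1)[OF T(3) cf]) simp
    with T len show "ltyp_val \<Gamma> (Lam ys' D') T" by (auto simp: ltyp_Lam_iff)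
  next
    assume "ltyp_val \<Gamma> (Lam ys' D') T"
    then obtain A As \<beta> where T: "T = VArr A As \<beta>" "length ys' = length (A # As)"
        "ltyp_decl (env_upds \<Gamma> ys' (A # As)) D' \<beta>"
      by (auto simp: ltyp_Lam_iff)
    have "ltyp_decl (env_upds \<Gamma> ys (A # As)) (subst_decl (sub ys' ys) D') \<beta>"
      using ren_env T(2) len inv by (intro ltyp_subst(1)[OF T(3) cf']) (auto simp: D'_def fv_subst_decl[OF cf])
    with T len undo show "ltyp_val \<Gamma> (Lam ys D) T" by (auto simp: ltyp_Lam_iff)
  qed
qed

lemma sem_equiv_alpha_val:
  assumes len: "length ys' = length ys" and dist: "distinct ys'"
    and fresh: "set ys' \<inter> (fv_decl D \<union> bv_decl D) = {}"
  shows "sem_equiv_val (Lam ys D) (Lam ys' (subst_decl (sub ys ys') D))"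
proof -
  define \<sigma> where "\<sigma> = sub ys ys'"
  define D' where "D' = subst_decl \<sigma> D"
  have cf: "capture_free_decl \<sigma> D" unfolding \<sigma>_def using fresh len by (intro capture_free_sub) auto
  have ren_id: "upds f ys ws ((\<lambda>v. v) v) = upds f ys ws v" for f :: "nat \<Rightarrow> clo" and ws v by simp
  have ren_\<sigma>: "upds f ys' ws (\<sigma> v) = upds f ys ws v"
    if "v \<in> fv_decl D" "length ws = length ys" for f :: "nat \<Rightarrow> clo" and ws v
    unfolding \<sigma>_def using upds_sub[OF len dist _ that(2)] fresh that(1) by blast
  have "val_approx \<Gamma> (Lam ys D) (Lam ys' D') T \<and> val_approx \<Gamma> (Lam ys' D') (Lam ys D) T"
    if "ltyp_val \<Gamma> (Lam ys D) T" for \<Gamma> T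
  proof -
    from that obtain A As \<beta> where T: "T = VArr A As \<beta>" "length ys = length (A # As)"
        "ltyp_decl (env_upds \<Gamma> ys (A # As)) D \<beta>"
      by (auto simp: ltyp_Lam_iff)
    note clo = approx_Clo_renamed[OF T(3) T(2)]
    show ?thesis unfolding val_approx_def closure_def val.case T(1) D'_def
      using clo[OF len refl cf capture_free_id(2) ren_\<sigma> ren_id] clo[OF refl len capture_free_id(2) cf ren_id ren_\<sigma>]
      by simp
  qed
  with ltyp_Lam_rename[OF len dist fresh] show ?thesis unfolding sem_equiv_val_def D'_def \<sigma>_def by blast
qed

lemma ltyp_rename_bound:
  assumes fresh: "x' \<notin> fv_decl D" "x' \<notin> bv_decl D"
  shows "ltyp_decl (\<Gamma>(x := ob)) D \<alpha> \<longleftrightarrow> ltyp_decl (\<Gamma>(x' := ob)) (subst_decl (id(x := x')) D) \<alpha>"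
proof -
  define \<sigma> :: "nat \<Rightarrow> nat" where "\<sigma> = id(x := x')"
  define D' where "D' = subst_decl \<sigma> D"
  have cf: "capture_free_decl \<sigma> D" by (rule capture_free_if_fresh(2)) (use fresh in \<open>auto simp: \<sigma>_def\<close>)
  have inv: "(id(x' := x)) (\<sigma> v) = v" if "v \<in> fv_decl D" for v using that fresh by (auto simp: \<sigma>_def)
  have cf': "capture_free_decl (id(x' := x)) D'" unfolding D'_def by (rule capture_free_subst_inverse(2)[OF cf inv])
  have undo: "subst_decl (id(x' := x)) D' = D" unfolding D'_def by (rule subst_decl_inverse[OF cf inv])
  have fv_D': "fv_decl D' = \<sigma> ` fv_decl D" unfolding D'_def by (rule fv_subst_decl[OF cf])
  show ?thesis unfolding D'_def[symmetric] \<sigma>_def[symmetric]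
  proof
    assume "ltyp_decl (\<Gamma>(x := ob)) D \<alpha>"
    then show "ltyp_decl (\<Gamma>(x' := ob)) D' \<alpha>" unfolding D'_def
      by (rule ltyp_subst(1)[OF _ cf]) (use fresh in \<open>auto simp: \<sigma>_def\<close>)
  next
    assume "ltyp_decl (\<Gamma>(x' := ob)) D' \<alpha>"
    then have "ltyp_decl (\<Gamma>(x := ob)) (subst_decl (id(x' := x)) D') \<alpha>"
      by (rule ltyp_subst(1)[OF _ cf']) (use fresh in \<open>auto simp: fv_D' \<sigma>_def\<close>)
    then show "ltyp_decl (\<Gamma>(x := ob)) D \<alpha>" by (simp only: undo)
  qed
qed

lemma sem_equiv_alpha_decl:
  assumes fresh: "x' \<notin> fv_decl D" "x' \<notin> bv_decl D"
  shows "sem_equiv_decl (Let u x V D) (Let u x' V (subst_decl (id(x := x')) D))"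
proof -
  define \<sigma> :: "nat \<Rightarrow> nat" where "\<sigma> = id(x := x')"
  define D' where "D' = subst_decl \<sigma> D"
  have cf: "capture_free_decl \<sigma> D" by (rule capture_free_if_fresh(2)) (use fresh in \<open>auto simp: \<sigma>_def\<close>)
  have "decl_approx 0 \<Gamma> (Let u x V D) (Let u x' V D') \<alpha> \<and> decl_approx 0 \<Gamma> (Let u x' V D') (Let u x V D) \<alpha>"
    if "ltyp_decl \<Gamma> (Let u x V D) \<alpha>" for \<Gamma> \<alpha>
  proof -
    from that obtain ob where b: "ltyp_binding \<Gamma> u V ob" and tD: "ltyp_decl (\<Gamma>(x := ob)) D \<alpha>"
      by (auto simp: ltyp_Let_iff)
    show ?thesis unfolding decl_approx_def
    proof (intro conjI allI impI)
      fix \<rho> \<rho>' assume env: "env_approx \<Gamma> \<rho> \<rho>'"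
      have "env_approx_on \<Gamma> (fv_val V) \<rho> \<rho>'" using env_approx_on_mono[OF env] by simp
      then have "approx T (bind_closure u \<rho> V) (bind_closure u \<rho>' V)" if "ob = Some T" for T
        using b that approx_bind_closure by blast
      with env b have env_x: "env_approx (\<Gamma>(x := ob)) (\<rho>(x := bind_closure u \<rho> V)) (\<rho>'(x := bind_closure u \<rho>' V))"
        by (intro env_approx_bind) auto
      have "env_approx_on (\<Gamma>(x := ob)) (fv_decl D)
          (\<rho>(x := bind_closure u \<rho> V) \<circ> (\<lambda>v. v)) (\<rho>'(x' := bind_closure u \<rho>' V) \<circ> \<sigma>)"
        "env_approx_on (\<Gamma>(x := ob)) (fv_decl D)
          (\<rho>(x' := bind_closure u \<rho> V) \<circ> \<sigma>) (\<rho>'(x := bind_closure u \<rho>' V) \<circ> (\<lambda>v. v))"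
        by (rule env_approx_on_cong[OF env_approx_on_mono[OF env_x]]; use fresh in \<open>auto simp: \<sigma>_def\<close>)+
      from fundamental(1)[OF tD capture_free_id(2) cf this(1)] fundamental(1)[OF tD cf capture_free_id(2) this(2)]
      show "approx_ev 0 \<alpha> (ev_decl \<rho> (Let u x V D)) (ev_decl \<rho>' (Let u x' V D'))"
        "approx_ev 0 \<alpha> (ev_decl \<rho> (Let u x' V D')) (ev_decl \<rho>' (Let u x V D))"
        unfolding D'_def by (simp_all add: approx_ev_Let)
    qed
  qed
  moreover have "ltyp_decl \<Gamma> (Let u x V D) \<alpha> \<longleftrightarrow> ltyp_decl \<Gamma> (Let u x' V D') \<alpha>" for \<Gamma> \<alpha>
    using ltyp_rename_bound[OF fresh] by (simp add: ltyp_Let_iff D'_def \<sigma>_def)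
  ultimately show ?thesis unfolding sem_equiv_decl_def D'_def \<sigma>_def by blast
qed

lemma sem_equiv_Lam: "sem_equiv_decl D D' \<Longrightarrow> sem_equiv_val (Lam ys D) (Lam ys D')"
  unfolding sem_equiv_decl_def sem_equiv_val_def ltyp_Lam_iff by (metis val_approx_Lam)

lemma sem_equiv_Let:
  assumes V: "sem_equiv_val V V'" and D: "sem_equiv_decl D D'"
  shows "sem_equiv_decl (Let u x V D) (Let u x V' D')"
proof -
  have binding: "ltyp_binding \<Gamma> u V ob \<longleftrightarrow> ltyp_binding \<Gamma> u V' ob" for \<Gamma> ob
    using V by (simp add: ltyp_binding_def sem_equiv_val_def split: option.splits)
  have "decl_approx 0 \<Gamma> (Let u x V D) (Let u x V' D') \<alpha> \<and> decl_approx 0 \<Gamma> (Let u x V' D') (Let u x V D) \<alpha>"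
    if "ltyp_decl \<Gamma> (Let u x V D) \<alpha>" for \<Gamma> \<alpha>
  proof -
    from that obtain ob where b: "ltyp_binding \<Gamma> u V ob" and t: "ltyp_decl (\<Gamma>(x := ob)) D \<alpha>"
      by (auto simp: ltyp_Let_iff)
    have "val_approx \<Gamma> V V' T \<and> val_approx \<Gamma> V' V T" if "ob = Some T" "u \<noteq> UZero" for T
      using b that V by (auto simp: ltyp_binding_def sem_equiv_val_def)
    moreover have "decl_approx 0 (\<Gamma>(x := ob)) D D' \<alpha> \<and> decl_approx 0 (\<Gamma>(x := ob)) D' D \<alpha>"
      using t D by (simp add: sem_equiv_decl_def)
    ultimately show ?thesis using b binding by (metis decl_approx_Let)
  qed
  then show ?thesis using D binding by (simp add: sem_equiv_decl_def ltyp_Let_iff)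
qed

lemma cong_sem_equiv: "cong_val V V' \<Longrightarrow> sem_equiv_val V V'" "cong_decl D D' \<Longrightarrow> sem_equiv_decl D D'"
proof (induction rule: cong_val_cong_decl.inducts)
  case (cv_refl V)
  then show ?case by (simp add: sem_equiv_val_def val_approx_refl)
next
  case (cv_sym V W)
  then show ?case by (auto simp: sem_equiv_val_def)
next
  case (cv_trans U V W)
  then show ?case unfolding sem_equiv_val_def by (metis val_approx_trans)
next
  case (cd_refl D)
  then show ?case by (simp add: sem_equiv_decl_def decl_approx_refl)
next
  case (cd_sym D E)
  then show ?case by (auto simp: sem_equiv_decl_def)
next
  case (cd_trans C D E)
  then show ?case unfolding sem_equiv_decl_def by (metis decl_approx_trans add_0)
next
  case (cv_lam D D' ys)
  from cv_lam.IH show ?case by (rule sem_equiv_Lam)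
next
  case (cd_let V V' D D' u x)
  from cd_let.IH show ?case by (rule sem_equiv_Let)
next
  case (cv_alpha ys' ys D)
  then show ?case by (rule sem_equiv_alpha_val)
next
  case (cd_alpha x' D x u V)
  then show ?case by (rule sem_equiv_alpha_decl)
next
  case (cd_swap x1 x2 V2 V1 u1 u2 D)
  then show ?case by (rule sem_equiv_swap)
next
  case (cd_gc x D V u)
  from cd_gc.hyps(1) show ?case by (rule sem_equiv_gc)
qed

section \<open>Reduction decreases the cost\<close>

definition lets :: "binding list \<Rightarrow> decl \<Rightarrow> decl" where
  "lets L D = foldr (\<lambda>(u, x, V) D. Let u x V D) L D"

lemma lets_simps[simp]: "lets [] D = D" "lets ((u, x, V) # L) D = Let u x V (lets L D)"
  by (simp_all add: lets_def)

lemma lets_append[simp]: "lets (L1 @ L2) D = lets L1 (lets L2 D)"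
  by (simp add: lets_def)

lemma mk_decl_eq_lets: "mk_decl L M = lets L (Body M)"
  by (simp add: mk_decl_def lets_def)

lemma lets_lets_of_body_of: "lets (lets_of D) (Body (body_of D)) = D"
  by (induction D rule: lets_of.induct) auto

lemma binders_simps[simp]: "binders [] = {}" "binders ((u, x, V) # L) = insert x (binders L)"
  by (auto simp: binders_def)

lemma binders_lets_of_subst[simp]: "binders (lets_of (subst_decl \<sigma> D)) = binders (lets_of D)"
  by (induction D arbitrary: \<sigma> rule: lets_of.induct) auto

fun ltyp_lets :: "env \<Rightarrow> binding list \<Rightarrow> env \<Rightarrow> bool" where
  "ltyp_lets \<Gamma> [] \<Gamma>' \<longleftrightarrow> \<Gamma>' = \<Gamma>"
| "ltyp_lets \<Gamma> ((u, x, V) # L) \<Gamma>' \<longleftrightarrow> (\<exists>ob. ltyp_binding \<Gamma> u V ob \<and> ltyp_lets (\<Gamma>(x := ob)) L \<Gamma>')"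

fun env_lets :: "(nat \<Rightarrow> clo) \<Rightarrow> binding list \<Rightarrow> nat \<Rightarrow> clo" where
  "env_lets \<rho> [] = \<rho>"
| "env_lets \<rho> ((u, x, V) # L) = env_lets (\<rho>(x := bind_closure u \<rho> V)) L"

lemma ltyp_lets_iff: "ltyp_decl \<Gamma> (lets L D) \<alpha> \<longleftrightarrow> (\<exists>\<Gamma>'. ltyp_lets \<Gamma> L \<Gamma>' \<and> ltyp_decl \<Gamma>' D \<alpha>)"
proof (induction L arbitrary: \<Gamma>)
  case (Cons b L)
  obtain u x V where b: "b = (u, x, V)" by (cases b)
  show ?case unfolding b lets_simps ltyp_Let_iff Cons.IH ltyp_lets.simps by blast
qed simp

lemma ev_lets_iff: "ev_decl \<rho> (lets L D) n r \<longleftrightarrow> ev_decl (env_lets \<rho> L) D n r"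
proof (induction L arbitrary: \<rho>)
  case (Cons b L)
  obtain u x V where b: "b = (u, x, V)" by (cases b)
  show ?case unfolding b lets_simps ev_Let_iff Cons.IH env_lets.simps ..
qed simp

lemma ltyp_lets_notin: "ltyp_lets \<Gamma> L \<Gamma>' \<Longrightarrow> x \<notin> binders L \<Longrightarrow> \<Gamma>' x = \<Gamma> x"
proof (induction L arbitrary: \<Gamma>)
  case (Cons b L)
  then show ?case by (cases b) fastforce
qed simp

lemma env_lets_notin: "x \<notin> binders L \<Longrightarrow> env_lets \<rho> L x = \<rho> x"
proof (induction L arbitrary: \<rho>)
  case (Cons b L)
  then show ?case by (cases b) simp
qed simp

lemma env_approx_lets: "ltyp_lets \<Gamma> L \<Gamma>' \<Longrightarrow> env_approx \<Gamma> \<rho> \<rho>' \<Longrightarrow> env_approx \<Gamma>' (env_lets \<rho> L) (env_lets \<rho>' L)"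
proof (induction L arbitrary: \<Gamma> \<rho> \<rho>')
  case (Cons b L)
  obtain u x V where b: "b = (u, x, V)" by (cases b)
  from Cons.prems(1) obtain ob where bind: "ltyp_binding \<Gamma> u V ob" and L: "ltyp_lets (\<Gamma>(x := ob)) L \<Gamma>'"
    by (auto simp: b)
  have "env_approx_on \<Gamma> (fv_val V) \<rho> \<rho>'" using env_approx_on_mono[OF Cons.prems(2)] by simp
  with bind have "approx T (bind_closure u \<rho> V) (bind_closure u \<rho>' V)" if "ob = Some T" for T
    using that approx_bind_closure by blast
  with Cons.prems(2) bind have "env_approx (\<Gamma>(x := ob)) (\<rho>(x := bind_closure u \<rho> V)) (\<rho>'(x := bind_closure u \<rho>' V))"
    by (intro env_approx_bind) auto
  from Cons.IH[OF L this] show ?case unfolding b env_lets.simps .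
qed simp

lemma decl_approx_lets:
  "ltyp_lets \<Gamma> L \<Gamma>' \<Longrightarrow> decl_approx d \<Gamma>' D D' \<alpha> \<Longrightarrow> decl_approx d \<Gamma> (lets L D) (lets L D') \<alpha>"
  unfolding decl_approx_def approx_ev_def ev_lets_iff using env_approx_lets by blast


lemma fundamental_tm_id: "typ_tm \<Gamma> M \<alpha> \<Longrightarrow> env_approx_on \<Gamma> (fv_tm M) \<rho> \<rho>' \<Longrightarrow>
    approx_ev 0 \<alpha> (ev_tm \<rho> M) (ev_tm \<rho>' M)"
  using fundamental_tm[of \<Gamma> M \<alpha> \<rho> "\<lambda>v. v" \<rho>' "\<lambda>v. v"] by (simp add: comp_def)

lemma fv_app_list_hole: "fv_tm t \<subseteq> fv_tm (app_list (map Var xs @ t # Ms))"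
  by (cases xs) auto

lemma ectx_fv: "ectx C \<Longrightarrow> fv_tm t \<subseteq> fv_tm (C t)"
proof (induction arbitrary: t rule: ectx.induct)
  case (ec_app C xs Ms)
  show ?case by (rule subset_trans[OF fv_app_list_hole ec_app.IH])
next
  case (ec_parl C M)
  show ?case by (rule subset_trans[OF _ ec_parl.IH]) simp
next
  case (ec_parr C M)
  show ?case by (rule subset_trans[OF _ ec_parr.IH]) simp
qed simp

lemma app_list_hole_typ:
  assumes "typ_tm \<Gamma> (app_list (map Var xs @ t # Ms)) \<gamma>"
  obtains \<beta> where "typ_tm \<Gamma> t \<beta>" "\<And>t'. typ_tm \<Gamma> t' \<beta> \<Longrightarrow> typ_tm \<Gamma> (app_list (map Var xs @ t' # Ms)) \<gamma>"
proof (cases xs)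
  case Nil
  with assms obtain A As where "typ_tm \<Gamma> t (VT (VArr A As \<gamma>))" "length Ms = length (A # As)"
      "\<forall>i<length Ms. typ_tm \<Gamma> (Ms ! i) (VT ((A # As) ! i))"
    using typ_App_inv by fastforce
  with Nil show ?thesis by (intro that) (auto intro: t_app)
next
  case (Cons x0 xs')
  let ?Ns = "\<lambda>s. map Var xs' @ s # Ms" and ?j = "length xs'"
  from assms Cons obtain A As where h: "typ_tm \<Gamma> (Var x0) (VT (VArr A As \<gamma>))" "length (?Ns t) = length (A # As)"
      "\<forall>i<length (?Ns t). typ_tm \<Gamma> (?Ns t ! i) (VT ((A # As) ! i))"
    using typ_App_inv by fastforce
  show ?thesis
  proof (rule that)
    show "typ_tm \<Gamma> t (VT ((A # As) ! ?j))" using h(3)[rule_format, of ?j] by (simp add: nth_append)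
  next
    fix t' assume t': "typ_tm \<Gamma> t' (VT ((A # As) ! ?j))"
    have "?Ns t' = (?Ns t)[?j := t']" by (simp add: list_update_append)
    then have "\<forall>i<length (?Ns t'). typ_tm \<Gamma> (?Ns t' ! i) (VT ((A # As) ! i))"
      using h(3) t' by (auto simp: nth_list_update)
    with h(1,2) Cons show "typ_tm \<Gamma> (app_list (map Var xs @ t' # Ms)) \<gamma>" by (auto intro: t_app)
  qed
qed

lemma ectx_hole_typ:
  assumes "ectx C" and "typ_tm \<Gamma> (C t) \<alpha>"
  obtains \<beta> where "typ_tm \<Gamma> t \<beta>" "\<And>t'. typ_tm \<Gamma> t' \<beta> \<Longrightarrow> typ_tm \<Gamma> (C t') \<alpha>"
  using assms
proof (induction arbitrary: t thesis rule: ectx.induct)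
  case ec_hole
  then show ?case by blast
next
  case (ec_app C xs Ms)
  obtain \<gamma> where g: "typ_tm \<Gamma> (app_list (map Var xs @ t # Ms)) \<gamma>"
      "\<And>s. typ_tm \<Gamma> s \<gamma> \<Longrightarrow> typ_tm \<Gamma> (C s) \<alpha>"
    using ec_app.IH ec_app.prems(2) by blast
  from g(1) show ?case by (rule app_list_hole_typ) (use ec_app.prems(1) g(2) in blast)
next
  case (ec_parl C M)
  obtain \<gamma> where g: "typ_tm \<Gamma> (Par t M) \<gamma>" "\<And>s. typ_tm \<Gamma> s \<gamma> \<Longrightarrow> typ_tm \<Gamma> (C s) \<alpha>"
    using ec_parl.IH ec_parl.prems(2) by blast
  from g(1) have "\<gamma> = Beh" "typ_tm \<Gamma> t Beh" "typ_tm \<Gamma> M Beh" by (auto elim: typ_tm.cases)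
  with g(2) show ?case by (intro ec_parl.prems(1)) (auto intro: t_par)
next
  case (ec_parr C M)
  obtain \<gamma> where g: "typ_tm \<Gamma> (Par M t) \<gamma>" "\<And>s. typ_tm \<Gamma> s \<gamma> \<Longrightarrow> typ_tm \<Gamma> (C s) \<alpha>"
    using ec_parr.IH ec_parr.prems(2) by blast
  from g(1) have "\<gamma> = Beh" "typ_tm \<Gamma> t Beh" "typ_tm \<Gamma> M Beh" by (auto elim: typ_tm.cases)
  with g(2) show ?case by (intro ec_parr.prems(1)) (auto intro: t_par)
qed

lemma app_list_hole_approx:
  assumes typed: "typ_tm \<Gamma> (app_list (map Var xs @ t # Ms)) \<gamma>" and hole: "typ_tm \<Gamma> t \<beta>"
    and env: "env_approx_on \<Gamma> (fv_tm (app_list (map Var xs @ t # Ms))) \<rho> \<rho>'"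
    and t: "approx_ev d \<beta> (ev_tm \<rho> t) (ev_tm \<rho>' t')"
  shows "approx_ev d \<gamma> (ev_tm \<rho> (app_list (map Var xs @ t # Ms))) (ev_tm \<rho>' (app_list (map Var xs @ t' # Ms)))"
proof (cases xs)
  case Nil
  from typed Nil obtain A As where h: "typ_tm \<Gamma> t (VT (VArr A As \<gamma>))" "length Ms = length (A # As)"
      "\<forall>i<length Ms. typ_tm \<Gamma> (Ms ! i) (VT ((A # As) ! i))"
    using typ_App_inv by fastforce
  have "\<beta> = VT (VArr A As \<gamma>)" using typ_tm_unique[OF hole h(1)] .
  moreover have "approx_ev 0 (VT ((A # As) ! i)) (ev_tm \<rho> (Ms ! i)) (ev_tm \<rho>' (Ms ! i))"
    if "i < length (A # As)" for i
    using h(2,3) that env Nil by (intro fundamental_tm_id) (auto intro: env_approx_on_mono dest: nth_mem)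
  ultimately show ?thesis
    using approx_ev_App[where \<delta> = "\<lambda>_. 0", OF _ h(2) h(2)] t Nil by simp
next
  case (Cons x0 xs')
  let ?Ns = "map Var xs' @ t # Ms" and ?Ns' = "map Var xs' @ t' # Ms" and ?j = "length xs'"
  from typed Cons obtain A As where h: "typ_tm \<Gamma> (Var x0) (VT (VArr A As \<gamma>))" "length ?Ns = length (A # As)"
      "\<forall>i<length ?Ns. typ_tm \<Gamma> (?Ns ! i) (VT ((A # As) ! i))"
    using typ_App_inv by fastforce
  have j: "?j < length (A # As)" "?Ns ! ?j = t" "?Ns' ! ?j = t'" using h(2) by (simp_all add: nth_append)
  have "typ_tm \<Gamma> t (VT ((A # As) ! ?j))" using h(3)[rule_format, of ?j] h(2) j(2) by simp
  with hole have \<beta>: "\<beta> = VT ((A # As) ! ?j)" by (rule typ_tm_unique)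
  have "approx_ev 0 (VT (VArr A As \<gamma>)) (ev_tm \<rho> (Var x0)) (ev_tm \<rho>' (Var x0))"
    using env Cons by (intro fundamental_tm_id[OF h(1)]) (auto intro: env_approx_on_mono)
  moreover have "approx_ev (if i = ?j then d else 0) (VT ((A # As) ! i)) (ev_tm \<rho> (?Ns ! i)) (ev_tm \<rho>' (?Ns' ! i))"
    if "i < length (A # As)" for i
  proof (cases "i = ?j")
    case True
    with t j \<beta> show ?thesis by simp
  next
    case False
    then have "?Ns' ! i = ?Ns ! i" by (simp add: nth_append nth_Cons')
    moreover have "?Ns ! i \<in> set ?Ns" using h(2) that by (intro nth_mem) simp
    then have "env_approx_on \<Gamma> (fv_tm (?Ns ! i)) \<rho> \<rho>'"
      using Cons by (intro env_approx_on_mono[OF env]) auto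
    then have "approx_ev 0 (VT ((A # As) ! i)) (ev_tm \<rho> (?Ns ! i)) (ev_tm \<rho>' (?Ns ! i))"
      using h(2,3) that by (intro fundamental_tm_id) simp_all
    ultimately show ?thesis using False by simp
  qed
  moreover have "length ?Ns' = length (A # As)" using h(2) by simp
  ultimately have "approx_ev (0 + (\<Sum>i<length (A # As). if i = ?j then d else 0)) \<gamma>
      (ev_tm \<rho> (App (Var x0) ?Ns)) (ev_tm \<rho>' (App (Var x0) ?Ns'))"
    using h(2) by (intro approx_ev_App) auto
  moreover have "(\<Sum>i<length (A # As). if i = ?j then d else 0) = d"
    using j(1) by (simp only: sum.delta finite_lessThan lessThan_iff if_True)
  ultimately show ?thesis using Cons by simp
qed

lemma ectx_approx:
  assumes "ectx C" and "typ_tm \<Gamma> (C t) \<alpha>" and "typ_tm \<Gamma> t \<beta>"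
    and "env_approx_on \<Gamma> (fv_tm (C t)) \<rho> \<rho>'" and "approx_ev d \<beta> (ev_tm \<rho> t) (ev_tm \<rho>' t')"
  shows "approx_ev d \<alpha> (ev_tm \<rho> (C t)) (ev_tm \<rho>' (C t'))"
  using assms
proof (induction arbitrary: t t' \<beta> rule: ectx.induct)
  case ec_hole
  then show ?case using typ_tm_unique by blast
next
  case (ec_app C xs Ms)
  let ?s = "\<lambda>t. app_list (map Var xs @ t # Ms)"
  obtain \<gamma> where g: "typ_tm \<Gamma> (?s t) \<gamma>" using ectx_hole_typ[OF ec_app.hyps(1) ec_app.prems(1)] by blast
  have env: "env_approx_on \<Gamma> (fv_tm (?s t)) \<rho> \<rho>'"
    using ec_app.prems(3) ectx_fv[OF ec_app.hyps(1)] by (rule env_approx_on_mono)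
  from app_list_hole_approx[OF g ec_app.prems(2) env ec_app.prems(4)]
  show ?case by (rule ec_app.IH[OF ec_app.prems(1) g ec_app.prems(3)])
next
  case (ec_parl C M)
  obtain \<gamma> where g: "typ_tm \<Gamma> (Par t M) \<gamma>" using ectx_hole_typ[OF ec_parl.hyps ec_parl.prems(1)] by blast
  then have \<gamma>: "\<gamma> = Beh" "typ_tm \<Gamma> t Beh" "typ_tm \<Gamma> M Beh" by (auto elim: typ_tm.cases)
  have env: "env_approx_on \<Gamma> (fv_tm (Par t M)) \<rho> \<rho>'"
    using ec_parl.prems(3) ectx_fv[OF ec_parl.hyps] by (rule env_approx_on_mono)
  have "approx_ev d Beh (ev_tm \<rho> t) (ev_tm \<rho>' t')" using ec_parl.prems(2,4) \<gamma>(2) typ_tm_unique by blast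
  moreover have "approx_ev 0 Beh (ev_tm \<rho> M) (ev_tm \<rho>' M)"
    using env by (intro fundamental_tm_id[OF \<gamma>(3)]) (auto intro: env_approx_on_mono)
  ultimately have "approx_ev d Beh (ev_tm \<rho> (Par t M)) (ev_tm \<rho>' (Par t' M))" using approx_ev_Par by fastforce
  then show ?case using g \<gamma>(1) by (intro ec_parl.IH[OF ec_parl.prems(1) _ ec_parl.prems(3)]) simp_all
next
  case (ec_parr C M)
  obtain \<gamma> where g: "typ_tm \<Gamma> (Par M t) \<gamma>" using ectx_hole_typ[OF ec_parr.hyps ec_parr.prems(1)] by blast
  then have \<gamma>: "\<gamma> = Beh" "typ_tm \<Gamma> t Beh" "typ_tm \<Gamma> M Beh" by (auto elim: typ_tm.cases)
  have env: "env_approx_on \<Gamma> (fv_tm (Par M t)) \<rho> \<rho>'"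
    using ec_parr.prems(3) ectx_fv[OF ec_parr.hyps] by (rule env_approx_on_mono)
  have "approx_ev d Beh (ev_tm \<rho> t) (ev_tm \<rho>' t')" using ec_parr.prems(2,4) \<gamma>(2) typ_tm_unique by blast
  moreover have "approx_ev 0 Beh (ev_tm \<rho> M) (ev_tm \<rho>' M)"
    using env by (intro fundamental_tm_id[OF \<gamma>(3)]) (auto intro: env_approx_on_mono)
  ultimately have "approx_ev d Beh (ev_tm \<rho> (Par M t)) (ev_tm \<rho>' (Par M t'))" using approx_ev_Par by fastforce
  then show ?case using g \<gamma>(1) by (intro ec_parr.IH[OF ec_parr.prems(1) _ ec_parr.prems(3)]) simp_all
qed

lemma env_approx_upd:
  "env_approx \<Gamma> \<rho> \<rho>' \<Longrightarrow> approx T c c' \<Longrightarrow> approx T c' c' \<Longrightarrow> env_approx (\<Gamma>(x \<mapsto> T)) (\<rho>(x := c)) (\<rho>'(x := c'))"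
  by (auto simp: env_approx_on_def)

lemma approx_bind_closure_dec:
  assumes "ltyp_val \<Gamma> V T" and "env_approx \<Gamma> \<rho> \<rho>'" and "u \<noteq> UZero"
  shows "approx T (bind_closure u \<rho> V) (bind_closure (dec u) \<rho>' V) \<and>
    approx T (bind_closure (dec u) \<rho>' V) (bind_closure (dec u) \<rho>' V)"
proof -
  have env: "env_approx_on \<Gamma> (fv_val V) \<rho> \<rho>'" "env_approx_on \<Gamma> (fv_val V) \<rho>' \<rho>'"
    using env_approx_on_mono[OF assms(2)] env_approx_on_mono[OF env_approx_on_right[OF assms(2)]] by simp_all
  have "approx T (closure \<rho> V) (closure \<rho>' V)" "approx T (closure \<rho>' V) (closure \<rho>' V)"
    using fundamental_val[OF assms(1)] env by simp_all
  with assms(3) show ?thesis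
    by (cases u) (auto simp: bind_closure_def approx_Stuck intro: approx_Stuck_right(1))
qed

lemma approx_ev_inline:
  assumes clo: "\<rho>2 x = Clo ys Db \<rho>1" and len: "length zs = length ys"
    and typed: "ltyp_decl (env_upds \<Gamma> ys Ts) Db \<beta>" and cf: "capture_free_decl (sub ys zs) Db"
    and env: "env_approx_on (env_upds \<Gamma> ys Ts) (fv_decl Db) (upds \<rho>1 ys (map \<rho>2 zs)) (\<rho>2' \<circ> sub ys zs)"
  shows "approx_ev 1 \<beta> (ev_tm \<rho>2 (App (Var x) (map Var zs))) (ev_decl \<rho>2' (subst_decl (sub ys zs) Db))"
proof -
  have "env_approx_on (env_upds \<Gamma> ys Ts) (fv_decl Db) (upds \<rho>1 ys (map \<rho>2 zs) \<circ> (\<lambda>v. v)) (\<rho>2' \<circ> sub ys zs)"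
    using env by (simp add: comp_def)
  from fundamental(1)[OF typed capture_free_id(2) cf this]
  obtain m r m' r' where e: "ev_decl (upds \<rho>1 ys (map \<rho>2 zs)) Db m r" "ev_decl \<rho>2' (subst_decl (sub ys zs) Db) m' r'"
      "m' \<le> m" "approx_ty \<beta> r r'" "approx_ty \<beta> r' r'"
    unfolding approx_ev_def by auto
  have "call (\<rho>2 x) (map \<rho>2 zs) (Suc m) r" unfolding clo using len e(1) by (intro call_Clo) simp_all
  then have "ev_tm \<rho>2 (App (Var x) (map Var zs)) (0 + 0 + Suc m) r" by (rule ev_app[OF ev_var ev_tms_vars])
  moreover note e(2)
  moreover have "m' + 1 \<le> 0 + 0 + Suc m" using e(3) by simp
  ultimately show ?thesis using e(4,5) by (rule approx_evI)
qed

lemma redex_typing: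
  assumes typed: "ltyp_decl \<Gamma> (Let u x (Lam ys Db) (lets L2 (Body (C (App (Var x) (map Var zs)))))) \<alpha>"
    and C: "ectx C" and u: "u \<noteq> UZero" and x: "x \<notin> binders L2"
  obtains A As \<beta> \<Gamma>2 where "length ys = length (A # As)" "ltyp_decl (env_upds \<Gamma> ys (A # As)) Db \<beta>"
    "ltyp_lets (\<Gamma>(x \<mapsto> VArr A As \<beta>)) L2 \<Gamma>2" "typ_tm \<Gamma>2 (C (App (Var x) (map Var zs))) \<alpha>"
    "typ_tm \<Gamma>2 (App (Var x) (map Var zs)) \<beta>" "length zs = length (A # As)"
    "\<And>i. i < length zs \<Longrightarrow> \<Gamma>2 (zs ! i) = Some ((A # As) ! i)"
proof -
  from typed obtain ob \<Gamma>2 where b: "ltyp_binding \<Gamma> u (Lam ys Db) ob" and L2: "ltyp_lets (\<Gamma>(x := ob)) L2 \<Gamma>2"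
      and tC: "typ_tm \<Gamma>2 (C (App (Var x) (map Var zs))) \<alpha>"
    by (auto simp: ltyp_Let_iff ltyp_lets_iff ltyp_Body_iff)
  obtain \<beta> where tt: "typ_tm \<Gamma>2 (App (Var x) (map Var zs)) \<beta>" using ectx_hole_typ[OF C tC] by blast
  then obtain A As where hx: "typ_tm \<Gamma>2 (Var x) (VT (VArr A As \<beta>))" and lzs: "length zs = length (A # As)"
      and hz: "\<forall>i<length zs. typ_tm \<Gamma>2 (Var (zs ! i)) (VT ((A # As) ! i))"
    by (auto dest!: typ_App_inv)
  have "\<Gamma>2 x = Some (VArr A As \<beta>)" using typ_Var_inv[OF hx] by simp
  moreover have "\<Gamma>2 x = ob" using ltyp_lets_notin[OF L2 x] by simp
  ultimately have ob: "ob = Some (VArr A As \<beta>)" by simp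
  with b u have "ltyp_val \<Gamma> (Lam ys Db) (VArr A As \<beta>)" by (simp add: ltyp_binding_def)
  then have lys: "length ys = length (A # As)" and tDb: "ltyp_decl (env_upds \<Gamma> ys (A # As)) Db \<beta>"
    by (auto simp: ltyp_Lam_iff)
  have args: "\<Gamma>2 (zs ! i) = Some ((A # As) ! i)" if "i < length zs" for i
    using hz that by (auto dest: typ_Var_inv)
  from L2 have "ltyp_lets (\<Gamma>(x \<mapsto> VArr A As \<beta>)) L2 \<Gamma>2" by (simp only: ob)
  from that[OF lys tDb this tC tt lzs args] show thesis .
qed

lemma ltyp_inlined_body:
  assumes typed: "ltyp_decl (env_upds \<Gamma> ys Ts) Db \<beta>" and "length ys = length Ts" and "length zs = length Ts"
    and args: "\<And>i. i < length zs \<Longrightarrow> \<Gamma>' (zs ! i) = Some (Ts ! i)"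
    and free: "\<And>v. v \<in> fv_decl Db \<Longrightarrow> v \<notin> set ys \<Longrightarrow> \<Gamma>' v = \<Gamma> v"
    and cf: "capture_free_decl (sub ys zs) Db"
  shows "ltyp_decl \<Gamma>' (subst_decl (sub ys zs) Db) \<beta>"
proof (rule ltyp_subst(1)[OF typed cf], intro ballI)
  fix v assume v: "v \<in> fv_decl Db"
  show "\<Gamma>' (sub ys zs v) = env_upds \<Gamma> ys Ts v"
  proof (cases "v \<in> set ys")
    case True
    with assms(2,3) have "first_index ys v < length zs" using map_of_zip_first_index[of v ys Ts] by simp
    with True assms(2,3) args show ?thesis by (simp add: sub_eq_upds upds_in env_upds_in)
  next
    case False
    with free v show ?thesis by (simp add: sub_eq_upds upds_notin env_upds_notin)
  qed
qed

lemma env_approx_inlined_body: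
  assumes env: "env_approx \<Gamma> \<rho> \<rho>'" and env2: "env_approx \<Gamma>' \<rho>2 \<rho>2'"
    and "length ys = length Ts" and "length zs = length Ts"
    and args: "\<And>i. i < length zs \<Longrightarrow> \<Gamma>' (zs ! i) = Some (Ts ! i)"
    and free: "\<And>v. v \<in> fv_decl Db \<Longrightarrow> v \<notin> set ys \<Longrightarrow> \<rho>2' v = \<rho>' v"
  shows "env_approx_on (env_upds \<Gamma> ys Ts) (fv_decl Db) (upds \<rho> ys (map \<rho>2 zs)) (\<rho>2' \<circ> sub ys zs)"
  unfolding env_approx_on_def
proof (intro ballI allI impI)
  fix v B assume v: "v \<in> fv_decl Db" and B: "env_upds \<Gamma> ys Ts v = Some B"
  show "approx B (upds \<rho> ys (map \<rho>2 zs) v) ((\<rho>2' \<circ> sub ys zs) v) \<and>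
      approx B ((\<rho>2' \<circ> sub ys zs) v) ((\<rho>2' \<circ> sub ys zs) v)"
  proof (cases "v \<in> set ys")
    case True
    let ?i = "first_index ys v"
    have i: "?i < length zs" using map_of_zip_first_index[OF True, of Ts] assms(3,4) by simp
    with True B assms(3,4) have "\<Gamma>' (zs ! ?i) = Some B" by (simp add: args env_upds_in)
    with env2 True i assms(3,4) show ?thesis by (simp add: upds_in sub_eq_upds env_approx_on_def)
  next
    case False
    with v B free[OF v False] env show ?thesis
      by (simp add: upds_notin sub_eq_upds env_upds_notin env_approx_on_def)
  qed
qed

context
  fixes C :: "tm \<Rightarrow> tm" and u :: usage and x :: nat and ys zs :: "nat list" and Db :: decl and L2 :: "binding list"
  assumes C: "ectx C" and u: "u \<noteq> UZero" and len: "length zs = length ys" and x: "x \<notin> binders L2"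
    and fv_lam: "fv_val (Lam ys Db) \<inter> insert x (binders L2) = {}"
    and bv_zs: "bv_decl Db \<inter> set zs = {}"
    and lets_fresh: "binders (lets_of Db) \<inter> fv_tm (C (App (Var x) (map Var zs))) = {}"
begin

lemma redex_reduct_typing:
  assumes typed: "ltyp_decl \<Gamma> (Let u x (Lam ys Db) (lets L2 (Body (C (App (Var x) (map Var zs)))))) \<alpha>"
  shows "ltyp_decl \<Gamma> (Let (dec u) x (Lam ys Db)
    (lets (L2 @ lets_of (subst_decl (sub ys zs) Db)) (Body (C (body_of (subst_decl (sub ys zs) Db)))))) \<alpha>"
proof -
  let ?t = "App (Var x) (map Var zs)" and ?Db' = "subst_decl (sub ys zs) Db"
  obtain A As \<beta> \<Gamma>2 where lys: "length ys = length (A # As)" and tDb: "ltyp_decl (env_upds \<Gamma> ys (A # As)) Db \<beta>"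
      and L2: "ltyp_lets (\<Gamma>(x \<mapsto> VArr A As \<beta>)) L2 \<Gamma>2" and tC: "typ_tm \<Gamma>2 (C ?t) \<alpha>"
      and tt: "typ_tm \<Gamma>2 ?t \<beta>" and lzs: "length zs = length (A # As)"
      and args: "\<And>i. i < length zs \<Longrightarrow> \<Gamma>2 (zs ! i) = Some ((A # As) ! i)"
    by (rule redex_typing[OF typed C u x]) blast
  have "\<Gamma>2 v = \<Gamma> v" if "v \<in> fv_decl Db" "v \<notin> set ys" for v
  proof -
    from fv_lam that have "v \<noteq> x" "v \<notin> binders L2" by auto
    then show ?thesis using ltyp_lets_notin[OF L2] by simp
  qed
  with tDb lys lzs args have "ltyp_decl \<Gamma>2 ?Db' \<beta>"
    by (intro ltyp_inlined_body capture_free_sub bv_zs len) simp_all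
  then obtain \<Gamma>3 where L3: "ltyp_lets \<Gamma>2 (lets_of ?Db') \<Gamma>3" and tb: "typ_tm \<Gamma>3 (body_of ?Db') \<beta>"
    by (subst (asm) lets_lets_of_body_of[symmetric]) (auto simp: ltyp_lets_iff ltyp_Body_iff)
  have same: "\<forall>v\<in>fv_tm (C ?t). \<Gamma>3 v = \<Gamma>2 v" using ltyp_lets_notin[OF L3] lets_fresh by auto
  obtain \<beta>' where "typ_tm \<Gamma>3 ?t \<beta>'" and fill: "\<And>s. typ_tm \<Gamma>3 s \<beta>' \<Longrightarrow> typ_tm \<Gamma>3 (C s) \<alpha>"
    using ectx_hole_typ[OF C typ_tm_weaken[OF tC same]] by blast
  moreover have "typ_tm \<Gamma>3 ?t \<beta>" using typ_tm_weaken[OF tt] same ectx_fv[OF C] by blast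
  ultimately have "typ_tm \<Gamma>3 (C (body_of ?Db')) \<alpha>" using typ_tm_unique tb by metis
  with L3 L2 have "ltyp_decl (\<Gamma>(x \<mapsto> VArr A As \<beta>)) (lets L2 (lets (lets_of ?Db') (Body (C (body_of ?Db'))))) \<alpha>"
    by (auto simp: ltyp_lets_iff ltyp_Body_iff)
  moreover have "ltyp_binding \<Gamma> (dec u) (Lam ys Db) (Some (VArr A As \<beta>))"
    using lys tDb by (auto simp: ltyp_binding_def ltyp_Lam_iff)
  ultimately show ?thesis by (auto simp: ltyp_Let_iff)
qed

lemma redex_reduct_approx:
  assumes typed: "ltyp_decl \<Gamma> (Let u x (Lam ys Db) (lets L2 (Body (C (App (Var x) (map Var zs)))))) \<alpha>"
  shows "decl_approx 1 \<Gamma> (Let u x (Lam ys Db) (lets L2 (Body (C (App (Var x) (map Var zs))))))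
    (Let (dec u) x (Lam ys Db)
      (lets (L2 @ lets_of (subst_decl (sub ys zs) Db)) (Body (C (body_of (subst_decl (sub ys zs) Db)))))) \<alpha>"
  unfolding decl_approx_def
proof (intro allI impI)
  fix \<rho> \<rho>' assume env: "env_approx \<Gamma> \<rho> \<rho>'"
  let ?t = "App (Var x) (map Var zs)" and ?Db' = "subst_decl (sub ys zs) Db"
  obtain A As \<beta> \<Gamma>2 where lys: "length ys = length (A # As)" and tDb: "ltyp_decl (env_upds \<Gamma> ys (A # As)) Db \<beta>"
      and L2: "ltyp_lets (\<Gamma>(x \<mapsto> VArr A As \<beta>)) L2 \<Gamma>2" and tC: "typ_tm \<Gamma>2 (C ?t) \<alpha>"
      and tt: "typ_tm \<Gamma>2 ?t \<beta>" and lzs: "length zs = length (A # As)"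
      and args: "\<And>i. i < length zs \<Longrightarrow> \<Gamma>2 (zs ! i) = Some ((A # As) ! i)"
    by (rule redex_typing[OF typed C u x]) blast
  let ?c = "bind_closure u \<rho> (Lam ys Db)" and ?c' = "bind_closure (dec u) \<rho>' (Lam ys Db)"
  let ?\<rho>2 = "env_lets (\<rho>(x := ?c)) L2" and ?\<rho>2' = "env_lets (\<rho>'(x := ?c')) L2"
  let ?\<rho>3 = "env_lets ?\<rho>2' (lets_of ?Db')"
  have "ltyp_val \<Gamma> (Lam ys Db) (VArr A As \<beta>)" unfolding ltyp_Lam_iff using lys tDb by blast
  note cc = approx_bind_closure_dec[OF this env u]
  have "env_approx (\<Gamma>(x \<mapsto> VArr A As \<beta>)) (\<rho>(x := ?c)) (\<rho>'(x := ?c'))"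
    using cc by (intro env_approx_upd[OF env]) simp_all
  from env_approx_lets[OF L2 this] have env2: "env_approx \<Gamma>2 ?\<rho>2 ?\<rho>2'" .
  have "?\<rho>2' v = \<rho>' v" if "v \<in> fv_decl Db" "v \<notin> set ys" for v
  proof -
    from fv_lam that have "v \<noteq> x" "v \<notin> binders L2" by auto
    then show ?thesis by (simp add: env_lets_notin)
  qed
  with env env2 lys lzs args
  have "env_approx_on (env_upds \<Gamma> ys (A # As)) (fv_decl Db) (upds \<rho> ys (map ?\<rho>2 zs)) (?\<rho>2' \<circ> sub ys zs)"
    by (rule env_approx_inlined_body)
  moreover have "?\<rho>2 x = Clo ys Db \<rho>" using x u by (simp add: env_lets_notin bind_closure_def closure_def)
  ultimately have "approx_ev 1 \<beta> (ev_tm ?\<rho>2 ?t) (ev_decl ?\<rho>2' ?Db')"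
    by (rule approx_ev_inline[OF _ len tDb capture_free_sub[OF bv_zs len], rotated])
  moreover have "ev_decl ?\<rho>2' ?Db' = ev_tm ?\<rho>3 (body_of ?Db')"
    using ev_lets_iff[of ?\<rho>2' "lets_of ?Db'" "Body (body_of ?Db')"]
    by (simp add: fun_eq_iff lets_lets_of_body_of ev_Body_iff)
  ultimately have inlined: "approx_ev 1 \<beta> (ev_tm ?\<rho>2 ?t) (ev_tm ?\<rho>3 (body_of ?Db'))" by simp
  have "v \<notin> binders (lets_of ?Db')" if "v \<in> fv_tm (C ?t)" for v using lets_fresh that by auto
  then have "env_approx_on \<Gamma>2 (fv_tm (C ?t)) ?\<rho>2 ?\<rho>3"
    by (intro env_approx_on_cong[OF env_approx_on_mono[OF env2]]) (simp_all add: env_lets_notin)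
  from ectx_approx[OF C tC tt this inlined]
  show "approx_ev 1 \<alpha> (ev_decl \<rho> (Let u x (Lam ys Db) (lets L2 (Body (C ?t)))))
      (ev_decl \<rho>' (Let (dec u) x (Lam ys Db) (lets (L2 @ lets_of ?Db') (Body (C (body_of ?Db'))))))"
    unfolding approx_ev_def ev_Let_iff lets_append ev_lets_iff ev_Body_iff .
qed

end

lemma base_red_sound:
  "base_red D D' \<Longrightarrow> ltyp_decl \<Gamma> D \<alpha> \<Longrightarrow> ltyp_decl \<Gamma> D' \<alpha> \<and> decl_approx 1 \<Gamma> D D' \<alpha>"
proof (induction rule: base_red.induct)
  case (1 C u zs ys x L2 Db L1)
  let ?t = "App (Var x) (map Var zs)" and ?Db' = "subst_decl (sub ys zs) Db"
  from "1.prems" obtain \<Gamma>1 where L1: "ltyp_lets \<Gamma> L1 \<Gamma>1"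
      and typed: "ltyp_decl \<Gamma>1 (Let u x (Lam ys Db) (lets L2 (Body (C ?t)))) \<alpha>"
    by (auto simp: mk_decl_eq_lets ltyp_lets_iff)
  note redex = "1.hyps"(1-3,5-8)
  have "ltyp_decl \<Gamma> (lets L1 (Let (dec u) x (Lam ys Db) (lets (L2 @ lets_of ?Db') (Body (C (body_of ?Db')))))) \<alpha>"
    using L1 redex_reduct_typing[OF redex typed] by (auto simp only: ltyp_lets_iff)
  moreover have "decl_approx 1 \<Gamma> (lets L1 (Let u x (Lam ys Db) (lets L2 (Body (C ?t)))))
      (lets L1 (Let (dec u) x (Lam ys Db) (lets (L2 @ lets_of ?Db') (Body (C (body_of ?Db')))))) \<alpha>"
    by (rule decl_approx_lets[OF L1 redex_reduct_approx[OF redex typed]])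
  ultimately show ?case by (simp add: mk_decl_eq_lets)
qed

lemma red_sound:
  assumes "red D D'" and typed: "ltyp_decl \<Gamma> D \<alpha>"
  shows "ltyp_decl \<Gamma> D' \<alpha> \<and> decl_approx 1 \<Gamma> D D' \<alpha>"
proof -
  from assms(1) obtain E E' where "cong_decl D E" "base_red E E'" "cong_decl E' D'" unfolding red_def by blast
  from cong_sem_equiv(2)[OF this(1)] typed have tE: "ltyp_decl \<Gamma> E \<alpha>" and DE: "decl_approx 0 \<Gamma> D E \<alpha>"
    unfolding sem_equiv_decl_def by blast+
  from base_red_sound[OF \<open>base_red E E'\<close> tE] have tE': "ltyp_decl \<Gamma> E' \<alpha>" and EE': "decl_approx 1 \<Gamma> E E' \<alpha>"
    by blast+
  from cong_sem_equiv(2)[OF \<open>cong_decl E' D'\<close>] tE' have "ltyp_decl \<Gamma> D' \<alpha>" and E'D': "decl_approx 0 \<Gamma> E' D' \<alpha>"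
    unfolding sem_equiv_decl_def by blast+
  moreover have "decl_approx (0 + 1 + 0) \<Gamma> D D' \<alpha>" by (rule decl_approx_trans[OF decl_approx_trans[OF DE EE'] E'D'])
  ultimately show ?thesis by simp
qed

text \<open>Evaluation is deterministic, and it
  succeeds for laxly typed declarations; for others \<open>THE\<close> gives an unspecified number.\<close>

definition cost :: "decl \<Rightarrow> nat" where
  "cost D = (THE n. \<exists>r. ev_decl (\<lambda>_. Stuck) D n r)"

lemma cost_eq: "ev_decl (\<lambda>_. Stuck) D n r \<Longrightarrow> cost D = n"
  unfolding cost_def by (rule the_equality) (use ev_deterministic(4) in blast)+

lemma decl_approx_cost:
  assumes "decl_approx d \<Gamma> D D' \<alpha>"
  shows "cost D' + d \<le> cost D"
proof -
  from assms env_approx_Stuck obtain n r n' r'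
    where "ev_decl (\<lambda>_. Stuck) D n r" "ev_decl (\<lambda>_. Stuck) D' n' r'" "n' + d \<le> n"
    unfolding decl_approx_def approx_ev_def by blast
  then show ?thesis by (simp add: cost_eq)
qed

theorem corollary2:
  assumes "wf_decl D" and "typ_decl \<Gamma> D \<alpha>"
  shows "\<not> (\<exists>f. f 0 = D \<and> (\<forall>i. red (f i) (f (Suc i))))"
proof
  assume "\<exists>f. f 0 = D \<and> (\<forall>i. red (f i) (f (Suc i)))"
  then obtain f where f0: "f 0 = D" and steps: "\<And>i. red (f i) (f (Suc i))" by blast
  have typed: "ltyp_decl \<Gamma> (f i) \<alpha>" for i
  proof (induction i)
    case 0
    show ?case using typ_decl_ltyp[OF assms(2,1)] f0 by simp
  next
    case (Suc i)
    then show ?case using red_sound[OF steps] by blast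
  qed
  have "cost (f (Suc i)) < cost (f i)" for i
  proof -
    have "decl_approx 1 \<Gamma> (f i) (f (Suc i)) \<alpha>" using red_sound[OF steps typed] by blast
    from decl_approx_cost[OF this] show ?thesis by simp
  qed
  then show False using wf_no_infinite_down_chainE[OF wf_less_than, of "cost \<circ> f"] by auto
qed

end
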